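(* Let $B$ be a simple Bratteli diagram of strict rank $d$, let $\mathcal F$ be a skeleton on $B$ with sets $\widetilde V,\overline V$, and let $\sigma:\widetilde V\to\overline V$ be a bijection. Suppose that for all sufficiently large $n$ the graph $\mathcal H_n$ is positively strongly connected and the incidence matrix $F_n$ satisfies the balance relations $$\sum_{w\in W_{\tilde v}}\tilde f^{(n)}_{u,w}=\sum_{w\in W'_{\sigma(\tilde v)}}\bar f^{(n)}_{u,w}\qquad\text{for all }u\in V_{n+1},\ \tilde v\in\widetilde V.$$ Then there is a perfect ordering $\omega$ on $B$ whose maximal paths are exactly the $M_{\tilde v}$ ($\tilde v\in\widetilde V$), whose minimal paths are exactly the $m_{\bar v}$ ($\bar v\in\overline V$), for which $\tilde e_w$ and $\bar e_w$ are the maximal and minimal edges of $r^{-1}(w)$ for every $w\in V_n$, $n\ge2$, and whose Vershik map satisfies $\varphi_\omega(M_{\tilde v})=m_{\sigma(\tilde v)}$ for all $\tilde v\in\widetilde V$.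
   Context: A Bratteli diagram $B$ has levels $V_n$ ($V_0=\{v_0\}$) and edge sets $E_n$ from $V_{n-1}$ to $V_n$ with source/range maps $s,r$; $X_B$ is its Cantor path space; standing assumption: $B$ aperiodic. Incidence matrix $F_n=(f^{(n)}_{u,w})_{u\in V_{n+1},w\in V_n}$: number of edges from $w$ to $u$. $B$ is simple if for every $n$ there is $m>n$ with every vertex of $V_n$ joined to every vertex of $V_m$. Strict rank $d$: $|r^{-1}(v)|\ge2$ for $v\ne v_0$ and $V_n=V$, $|V|=d$, for all $n\ge1$ (levels identified). An ordering is a linear order on each $r^{-1}(v)$; it is perfect if it admits a Vershik map $\varphi_\omega$ (a homeomorphism of $X_B$ sending maximal infinite paths onto minimal ones and sending each non-maximal $x$ to the path obtained by replacing its first non-maximal edge by its successor and the preceding edges by the minimal path to the source of that successor). A path is vertical if it passes through the same vertex at every level $\ge1$. Skeleton: choose $\widetilde V,\overline V\subseteq V$ with $|\widetilde V|=|\overline V|=k\le d$; for each $\tilde v\in\widetilde V$ a vertical path $M_{\tilde v}$ through $\tilde v$ and for each $\bar v\in\overline V$ a vertical path $m_{\bar v}$ through $\bar v$, such that if $v\in\widetilde V\cap\overline V$ then $M_v,m_v$ share no edge; maps $w\mapsto\tilde v(w)\in\widetilde V$, $w\mapsto\bar v(w)\in\overline V$ on $V$; and for each $n\ge2$, $w\in V_n$, two distinct edges $\tilde e_w,\bar e_w\in r^{-1}(w)$ with $s(\tilde e_w)=\tilde v(w)$, $s(\bar e_w)=\bar v(w)$, where $\tilde e_w$ is the level-$n$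 edge of $M_w$ if $w\in\widetilde V$ and $\bar e_w$ is the level-$n$ edge of $m_w$ if $w\in\overline V$. The collection $\mathcal F$ of these paths and edges is a skeleton. $W_{\tilde v}=\{w\in V:\tilde v(w)=\tilde v\}$, $W'_{\bar v}=\{w\in V:\bar v(w)=\bar v\}$, $[\bar v,\tilde v]=W'_{\bar v}\cap W_{\tilde v}$. The associated graph $\mathcal H$ has vertices the nonempty sets $[\bar v,\tilde v]$ and a directed edge from $[\bar v,\tilde v]$ to $[\bar v_1,\tilde v_1]$ iff $\sigma(\tilde v)=\bar v_1$ (loops allowed); $\mathcal H_n$ is a copy of $\mathcal H$ whose vertices are regarded as subsets of $V_n$. For $u\in V_{n+1}$, $w\in V_n$: $\tilde f^{(n)}_{u,w}=f^{(n)}_{u,w}-1$ if $\tilde e_u$ has source $w$, else $f^{(n)}_{u,w}$; $\bar f^{(n)}_{u,w}=f^{(n)}_{u,w}-1$ if $\bar e_u$ has source $w$, else $f^{(n)}_{u,w}$. Crossing number: $P_u([\bar v,\tilde v])=\sum_{w\in[\bar v,\tilde v]}\tilde f^{(n)}_{u,w}$. $\mathcal H_n$ is positively strongly connected if for each $u\in V_{n+1}$ the subgraph of $\mathcal H_n$ induced on the vertices $t$ with $P_u(t)>0$ is strongly connected. *)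

theory Defs
  imports "HOL-Analysis.Analysis"
begin

text \<open>Level 0 is the single vertex v0, every level n >= 1 is the same finite set V.
 E n is the set of edges from level n-1 to level n (n >= 1), with source map s n and
 range map r n.  Infinite paths are maps x :: nat => 'e, x i being the edge of level i+1.\<close>

definition lvl :: "'v \<Rightarrow> 'v set \<Rightarrow> nat \<Rightarrow> 'v set" where
  "lvl v0 V n = (if n = 0 then {v0} else V)"

definition rinv :: "(nat \<Rightarrow> 'e set) \<Rightarrow> (nat \<Rightarrow> 'e \<Rightarrow> 'v) \<Rightarrow> nat \<Rightarrow> 'v \<Rightarrow> 'e set" where
  "rinv E r n v = {e \<in> E n. r n e = v}"

definition strict_rank_BD ::
  "nat \<Rightarrow> 'v \<Rightarrow> 'v set \<Rightarrow> (nat \<Rightarrow> 'e set) \<Rightarrow> (nat \<Rightarrow> 'e \<Rightarrow> 'v) \<Rightarrow> (nat \<Rightarrow> 'e \<Rightarrow> 'v) \<Rightarrow> bool" where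
  "strict_rank_BD d v0 V E s r \<longleftrightarrow>
     finite V \<and> card V = d \<and>
     (\<forall>n\<ge>1. finite (E n) \<and> (\<forall>e\<in>E n. s n e \<in> lvl v0 V (n - 1) \<and> r n e \<in> V)
        \<and> (\<forall>v\<in>V. card (rinv E r n v) \<ge> 2))"

definition finite_path ::
  "(nat \<Rightarrow> 'e set) \<Rightarrow> (nat \<Rightarrow> 'e \<Rightarrow> 'v) \<Rightarrow> (nat \<Rightarrow> 'e \<Rightarrow> 'v) \<Rightarrow> nat \<Rightarrow> 'v \<Rightarrow> nat \<Rightarrow> 'v \<Rightarrow> bool" where
  "finite_path E s r n v m w \<longleftrightarrow> n < m \<and>
     (\<exists>p :: nat \<Rightarrow> 'e. (\<forall>i. n < i \<and> i \<le> m \<longrightarrow> p i \<in> E i)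
        \<and> s (Suc n) (p (Suc n)) = v \<and> r m (p m) = w
        \<and> (\<forall>i. n < i \<and> i < m \<longrightarrow> r i (p i) = s (Suc i) (p (Suc i))))"

definition simple_BD ::
  "'v \<Rightarrow> 'v set \<Rightarrow> (nat \<Rightarrow> 'e set) \<Rightarrow> (nat \<Rightarrow> 'e \<Rightarrow> 'v) \<Rightarrow> (nat \<Rightarrow> 'e \<Rightarrow> 'v) \<Rightarrow> bool" where
  "simple_BD v0 V E s r \<longleftrightarrow>
     (\<forall>n. \<exists>m>n. \<forall>v\<in>lvl v0 V n. \<forall>w\<in>lvl v0 V m. finite_path E s r n v m w)"

definition path_space ::
  "(nat \<Rightarrow> 'e set) \<Rightarrow> (nat \<Rightarrow> 'e \<Rightarrow> 'v) \<Rightarrow> (nat \<Rightarrow> 'e \<Rightarrow> 'v) \<Rightarrow> (nat \<Rightarrow> 'e) set" where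
  "path_space E s r = {x. \<forall>i. x i \<in> E (Suc i) \<and> r (Suc i) (x i) = s (Suc (Suc i)) (x (Suc i))}"

definition path_top ::
  "(nat \<Rightarrow> 'e set) \<Rightarrow> (nat \<Rightarrow> 'e \<Rightarrow> 'v) \<Rightarrow> (nat \<Rightarrow> 'e \<Rightarrow> 'v) \<Rightarrow> (nat \<Rightarrow> 'e) topology" where
  "path_top E s r = subtopology (product_topology (\<lambda>i. discrete_topology (E (Suc i))) UNIV)
                                (path_space E s r)"

definition is_ordering ::
  "'v set \<Rightarrow> (nat \<Rightarrow> 'e set) \<Rightarrow> (nat \<Rightarrow> 'e \<Rightarrow> 'v) \<Rightarrow> (nat \<Rightarrow> 'e rel) \<Rightarrow> bool" where
  "is_ordering V E r \<omega> \<longleftrightarrow>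
     (\<forall>n\<ge>1. \<omega> n \<subseteq> {(e, e'). e \<in> E n \<and> e' \<in> E n \<and> r n e = r n e'} \<and>
        (\<forall>v\<in>V. linear_order_on (rinv E r n v) (\<omega> n \<inter> (rinv E r n v \<times> rinv E r n v))))"

definition max_edge :: "(nat \<Rightarrow> 'e set) \<Rightarrow> (nat \<Rightarrow> 'e \<Rightarrow> 'v) \<Rightarrow> (nat \<Rightarrow> 'e rel) \<Rightarrow> nat \<Rightarrow> 'e \<Rightarrow> bool" where
  "max_edge E r \<omega> n e \<longleftrightarrow> e \<in> E n \<and> (\<forall>e'\<in>E n. r n e' = r n e \<longrightarrow> (e', e) \<in> \<omega> n)"

definition min_edge :: "(nat \<Rightarrow> 'e set) \<Rightarrow> (nat \<Rightarrow> 'e \<Rightarrow> 'v) \<Rightarrow> (nat \<Rightarrow> 'e rel) \<Rightarrow> nat \<Rightarrow> 'e \<Rightarrow> bool" where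
  "min_edge E r \<omega> n e \<longleftrightarrow> e \<in> E n \<and> (\<forall>e'\<in>E n. r n e' = r n e \<longrightarrow> (e, e') \<in> \<omega> n)"

definition is_succ :: "(nat \<Rightarrow> 'e rel) \<Rightarrow> nat \<Rightarrow> 'e \<Rightarrow> 'e \<Rightarrow> bool" where
  "is_succ \<omega> n e e' \<longleftrightarrow> (e, e') \<in> \<omega> n \<and> e \<noteq> e' \<and>
     (\<forall>e''. (e, e'') \<in> \<omega> n \<and> (e'', e') \<in> \<omega> n \<longrightarrow> e'' = e \<or> e'' = e')"

definition max_paths ::
  "(nat \<Rightarrow> 'e set) \<Rightarrow> (nat \<Rightarrow> 'e \<Rightarrow> 'v) \<Rightarrow> (nat \<Rightarrow> 'e \<Rightarrow> 'v) \<Rightarrow> (nat \<Rightarrow> 'e rel) \<Rightarrow> (nat \<Rightarrow> 'e) set" where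
  "max_paths E s r \<omega> = {x \<in> path_space E s r. \<forall>i. max_edge E r \<omega> (Suc i) (x i)}"

definition min_paths ::
  "(nat \<Rightarrow> 'e set) \<Rightarrow> (nat \<Rightarrow> 'e \<Rightarrow> 'v) \<Rightarrow> (nat \<Rightarrow> 'e \<Rightarrow> 'v) \<Rightarrow> (nat \<Rightarrow> 'e rel) \<Rightarrow> (nat \<Rightarrow> 'e) set" where
  "min_paths E s r \<omega> = {x \<in> path_space E s r. \<forall>i. min_edge E r \<omega> (Suc i) (x i)}"

definition vershik_map ::
  "(nat \<Rightarrow> 'e set) \<Rightarrow> (nat \<Rightarrow> 'e \<Rightarrow> 'v) \<Rightarrow> (nat \<Rightarrow> 'e \<Rightarrow> 'v) \<Rightarrow> (nat \<Rightarrow> 'e rel)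
     \<Rightarrow> ((nat \<Rightarrow> 'e) \<Rightarrow> (nat \<Rightarrow> 'e)) \<Rightarrow> bool" where
  "vershik_map E s r \<omega> \<phi> \<longleftrightarrow>
     homeomorphic_map (path_top E s r) (path_top E s r) \<phi> \<and>
     \<phi> ` max_paths E s r \<omega> = min_paths E s r \<omega> \<and>
     (\<forall>x\<in>path_space E s r. x \<notin> max_paths E s r \<omega> \<longrightarrow>
        (let k = (LEAST i. \<not> max_edge E r \<omega> (Suc i) (x i)) in
           \<phi> x \<in> path_space E s r \<and> (\<forall>i>k. \<phi> x i = x i) \<and>
           is_succ \<omega> (Suc k) (x k) (\<phi> x k) \<and>
           (\<forall>i<k. min_edge E r \<omega> (Suc i) (\<phi> x i))))"

text \<open>Skeleton.  et n w, eb n w are the edges \<tilde>e_w, \<bar>e_w in r^{-1}(w) at level n >= 2;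
  the level-n edge of a path x is x (n-1).\<close>
definition skeleton ::
  "'v set \<Rightarrow> (nat \<Rightarrow> 'e set) \<Rightarrow> (nat \<Rightarrow> 'e \<Rightarrow> 'v) \<Rightarrow> (nat \<Rightarrow> 'e \<Rightarrow> 'v) \<Rightarrow> 'v set \<Rightarrow> 'v set
    \<Rightarrow> ('v \<Rightarrow> nat \<Rightarrow> 'e) \<Rightarrow> ('v \<Rightarrow> nat \<Rightarrow> 'e) \<Rightarrow> ('v \<Rightarrow> 'v) \<Rightarrow> ('v \<Rightarrow> 'v)
    \<Rightarrow> (nat \<Rightarrow> 'v \<Rightarrow> 'e) \<Rightarrow> (nat \<Rightarrow> 'v \<Rightarrow> 'e) \<Rightarrow> bool" where
  "skeleton V E s r Vt Vb M m vt vb et eb \<longleftrightarrow>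
     Vt \<subseteq> V \<and> Vb \<subseteq> V \<and> card Vt = card Vb \<and>
     (\<forall>v\<in>Vt. M v \<in> path_space E s r \<and> (\<forall>i. r (Suc i) (M v i) = v)) \<and>
     (\<forall>v\<in>Vb. m v \<in> path_space E s r \<and> (\<forall>i. r (Suc i) (m v i) = v)) \<and>
     (\<forall>v\<in>Vt \<inter> Vb. \<forall>i. M v i \<noteq> m v i) \<and>
     (\<forall>w\<in>V. vt w \<in> Vt \<and> vb w \<in> Vb) \<and>
     (\<forall>n\<ge>2. \<forall>w\<in>V. et n w \<in> rinv E r n w \<and> eb n w \<in> rinv E r n w \<and> et n w \<noteq> eb n w \<and>
         s n (et n w) = vt w \<and> s n (eb n w) = vb w \<and>
         (w \<in> Vt \<longrightarrow> et n w = M w (n - 1)) \<and> (w \<in> Vb \<longrightarrow> eb n w = m w (n - 1)))"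

text \<open>Incidence matrix entry f^(n)_{u,w}: edges of E (n+1) from w to u.\<close>
definition incid :: "(nat \<Rightarrow> 'e set) \<Rightarrow> (nat \<Rightarrow> 'e \<Rightarrow> 'v) \<Rightarrow> (nat \<Rightarrow> 'e \<Rightarrow> 'v) \<Rightarrow> nat \<Rightarrow> 'v \<Rightarrow> 'v \<Rightarrow> nat" where
  "incid E s r n u w = card {e \<in> E (Suc n). s (Suc n) e = w \<and> r (Suc n) e = u}"

definition incid_t :: "(nat \<Rightarrow> 'e set) \<Rightarrow> (nat \<Rightarrow> 'e \<Rightarrow> 'v) \<Rightarrow> (nat \<Rightarrow> 'e \<Rightarrow> 'v) \<Rightarrow> (nat \<Rightarrow> 'v \<Rightarrow> 'e)
     \<Rightarrow> nat \<Rightarrow> 'v \<Rightarrow> 'v \<Rightarrow> nat" where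
  "incid_t E s r et n u w = incid E s r n u w - (if s (Suc n) (et (Suc n) u) = w then 1 else 0)"

text \<open>[vb, vt] = W'_vb \<inter> W_vt.\<close>
definition cell :: "'v set \<Rightarrow> ('v \<Rightarrow> 'v) \<Rightarrow> ('v \<Rightarrow> 'v) \<Rightarrow> 'v \<Rightarrow> 'v \<Rightarrow> 'v set" where
  "cell V vt vb b t = {w \<in> V. vb w = b \<and> vt w = t}"

text \<open>Vertices of H: pairs (vb, vt) with nonempty [vb, vt] (identified with these sets).\<close>
definition H_verts :: "'v set \<Rightarrow> 'v set \<Rightarrow> 'v set \<Rightarrow> ('v \<Rightarrow> 'v) \<Rightarrow> ('v \<Rightarrow> 'v) \<Rightarrow> ('v \<times> 'v) set" where
  "H_verts V Vt Vb vt vb = {(b, t). b \<in> Vb \<and> t \<in> Vt \<and> cell V vt vb b t \<noteq> {}}"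

definition H_edges :: "'v set \<Rightarrow> 'v set \<Rightarrow> 'v set \<Rightarrow> ('v \<Rightarrow> 'v) \<Rightarrow> ('v \<Rightarrow> 'v) \<Rightarrow> ('v \<Rightarrow> 'v)
     \<Rightarrow> (('v \<times> 'v) \<times> ('v \<times> 'v)) set" where
  "H_edges V Vt Vb vt vb \<sigma> = {((b, t), (b1, t1)). (b, t) \<in> H_verts V Vt Vb vt vb \<and>
        (b1, t1) \<in> H_verts V Vt Vb vt vb \<and> \<sigma> t = b1}"

definition crossing :: "'v set \<Rightarrow> (nat \<Rightarrow> 'e set) \<Rightarrow> (nat \<Rightarrow> 'e \<Rightarrow> 'v) \<Rightarrow> (nat \<Rightarrow> 'e \<Rightarrow> 'v)
     \<Rightarrow> ('v \<Rightarrow> 'v) \<Rightarrow> ('v \<Rightarrow> 'v) \<Rightarrow> (nat \<Rightarrow> 'v \<Rightarrow> 'e) \<Rightarrow> nat \<Rightarrow> 'v \<Rightarrow> 'v \<times> 'v \<Rightarrow> nat" where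
  "crossing V E s r vt vb et n u p = (\<Sum>w\<in>cell V vt vb (fst p) (snd p). incid_t E s r et n u w)"

definition pos_strongly_connected ::
  "'v set \<Rightarrow> (nat \<Rightarrow> 'e set) \<Rightarrow> (nat \<Rightarrow> 'e \<Rightarrow> 'v) \<Rightarrow> (nat \<Rightarrow> 'e \<Rightarrow> 'v) \<Rightarrow> 'v set \<Rightarrow> 'v set
     \<Rightarrow> ('v \<Rightarrow> 'v) \<Rightarrow> ('v \<Rightarrow> 'v) \<Rightarrow> (nat \<Rightarrow> 'v \<Rightarrow> 'e) \<Rightarrow> ('v \<Rightarrow> 'v) \<Rightarrow> nat \<Rightarrow> bool" where
  "pos_strongly_connected V E s r Vt Vb vt vb et \<sigma> n \<longleftrightarrow>
     (\<forall>u\<in>V. let T = {p \<in> H_verts V Vt Vb vt vb. crossing V E s r vt vb et n u p > 0} in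
        \<forall>a\<in>T. \<forall>b\<in>T. (a, b) \<in> (H_edges V Vt Vb vt vb \<sigma> \<inter> (T \<times> T))\<^sup>*)"

end

theory Submission
  imports Defs
begin

text \<open>
  The ordering is built level by level: for
  every level n and vertex u the set r^{-1}(u) is enumerated by a list and ordered along it.  At
  levels n >= 2 the list runs from the skeleton edge eb_u to et_u, so these become the minimal and
  maximal edges and the maximal (minimal) paths are exactly the M_t (m_b).  The Vershik map phi is
  then defined explicitly, with phi(M_t) = m_(sigma t).  It is continuous at M_t as soon as, from
  some level K on, consecutive edges e, e' of every list are linked: sigma(vt(s e)) = vb(s e').
  Such lists exist by Euler's theorem for trails in the graph H of cells [b, t]: the balance
  relations are its degree condition and positive strong connectivity its connectivity condition.
  The inverse of phi is the Vershik map of the reversed lists for the dual skeleton, so phi is a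
  homeomorphism.\<close>

section \<open>Euler trails\<close>
text \<open>
  An arrangement of a finite set A of ``edges'' into a list in which the tail t of each element
  equals the head h of the next one is an Euler trail of the multigraph whose vertices are the
  values of h and t.\<close>

definition chain_through :: "('a \<Rightarrow> 'a \<Rightarrow> bool) \<Rightarrow> 'a set \<Rightarrow> 'a \<Rightarrow> 'a list \<Rightarrow> bool" where
  "chain_through R A a0 W \<longleftrightarrow> distinct W \<and> set W \<subseteq> A \<and> a0 \<in> set W \<and> successively R W"

definition closed_chain :: "('a \<Rightarrow> 'a \<Rightarrow> bool) \<Rightarrow> 'a list \<Rightarrow> bool" where
  "closed_chain R W \<longleftrightarrow> W \<noteq> [] \<and> successively R W \<and> R (last W) (hd W)"

lemma closed_chain_rotate1:
  assumes "closed_chain R W" shows "closed_chain R (rotate1 W)"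
proof (cases W)
  case Nil then show ?thesis using assms by (simp add: closed_chain_def)
next
  case (Cons a xs)
  then show ?thesis using assms
    by (cases "xs = []") (auto simp: closed_chain_def successively_append_iff successively_Cons)
qed

lemma closed_chain_rotate:
  assumes "closed_chain R W" shows "closed_chain R (rotate n W)"
  using assms by (induction n) (auto intro: closed_chain_rotate1)

text \<open>Counting along a chain: every element except the first has a predecessor whose tail is
  its head, so heads and tails of the elements of a chain agree up to its two ends.\<close>
lemma chain_head_tail_count:
  assumes "successively (\<lambda>x y. t x = h y) W" "W \<noteq> []"
  shows "length (filter (\<lambda>a. h a = z) W) + (if t (last W) = z then 1 else 0)
       = length (filter (\<lambda>a. t a = z) W) + (if h (hd W) = z then 1 else 0)"
  using assms
proof (induction W rule: induct_list012)
  case (3 x y zs)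
  then show ?case by (auto simp: successively_Cons)
qed auto

lemma length_filter_distinct:
  "distinct W \<Longrightarrow> length (filter P W) = card {a \<in> set W. P a}"
  by (metis distinct_card distinct_filter set_filter)

text \<open>If every value occurs as often as a head as it does as a tail, a longest chain is closed:
  otherwise the tail of its last element is the head of some unused element, which extends it.\<close>
lemma longest_chain_closed:
  fixes h t :: "'a \<Rightarrow> 'b"
  assumes finA: "finite A"
    and bal: "\<And>z. card {a\<in>A. h a = z} = card {a\<in>A. t a = z}"
    and W: "chain_through (\<lambda>x y. t x = h y) A a0 W"
    and longest: "\<And>W'. chain_through (\<lambda>x y. t x = h y) A a0 W' \<Longrightarrow> length W' \<le> length W"
  shows "t (last W) = h (hd W)"
proof (rule ccontr)
  assume open_end: "t (last W) \<noteq> h (hd W)"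
  define z where "z = t (last W)"
  have dW: "distinct W" and sW: "set W \<subseteq> A" and cW: "successively (\<lambda>x y. t x = h y) W"
    and Wne: "W \<noteq> []" using W by (auto simp: chain_through_def)
  have "card {a\<in>set W. h a = z} + 1 = card {a\<in>set W. t a = z}"
    using chain_head_tail_count[OF cW Wne, of z] open_end dW
    by (simp add: z_def length_filter_distinct)
  also have "\<dots> \<le> card {a\<in>A. t a = z}"
    by (rule card_mono) (use finA sW in auto)
  finally have "card {a\<in>set W. h a = z} < card {a\<in>A. h a = z}" using bal by simp
  then have "\<not> {a\<in>A. h a = z} \<subseteq> {a\<in>set W. h a = z}"
    using card_mono[of "{a\<in>set W. h a = z}" "{a\<in>A. h a = z}"] by auto
  then obtain y where y: "y \<in> A" "h y = z" "y \<notin> set W" by auto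
  have "chain_through (\<lambda>x y. t x = h y) A a0 (W @ [y])"
    using W y Wne by (auto simp: chain_through_def successively_append_iff z_def)
  from longest[OF this] show False by simp
qed

text \<open>If moreover every proper subset of A containing a0 is left by some element (its tail is the
  head of an element outside), a longest closed chain uses all of A: rotate it so that it ends
  at an element leading out of its support and append the element outside.\<close>
lemma longest_closed_chain_covers:
  fixes h t :: "'a \<Rightarrow> 'b"
  assumes cut: "\<And>U. a0 \<in> U \<Longrightarrow> U \<subseteq> A \<Longrightarrow> U \<noteq> A \<Longrightarrow> \<exists>x\<in>U. \<exists>y\<in>A-U. t x = h y"
    and W: "chain_through (\<lambda>x y. t x = h y) A a0 W"
    and closed: "closed_chain (\<lambda>x y. t x = h y) W"
    and longest: "\<And>W'. chain_through (\<lambda>x y. t x = h y) A a0 W' \<Longrightarrow> length W' \<le> length W"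
  shows "set W = A"
proof (rule ccontr)
  assume "set W \<noteq> A"
  with cut[of "set W"] W obtain x y where xy: "x \<in> set W" "y \<in> A" "y \<notin> set W" "t x = h y"
    by (auto simp: chain_through_def)
  obtain i where i: "i < length W" "W ! i = x" by (meson in_set_conv_nth xy(1))
  define W' where "W' = rotate (Suc i) W"
  have last_W': "last W' = x"
  proof (cases "Suc i = length W")
    case True
    then have "W' = W" unfolding W'_def by (simp add: rotate_drop_take)
    then show ?thesis using True i by (metis diff_Suc_1 last_conv_nth list.size(3) not_less0)
  next
    case False
    then have "W' = drop (Suc i) W @ take (Suc i) W" using i unfolding W'_def
      by (simp add: rotate_drop_take)
    then show ?thesis using i False by (simp add: take_Suc_conv_app_nth)
  qed
  have "chain_through (\<lambda>x y. t x = h y) A a0 (W' @ [y])"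
    using W xy closed_chain_rotate[OF closed, of "Suc i"] last_W'
    by (auto simp: chain_through_def closed_chain_def successively_append_iff W'_def)
  from longest[OF this] show False by (simp add: W'_def)
qed

lemma euler_circuit:
  fixes A :: "'a set" and h t :: "'a \<Rightarrow> 'b"
  assumes finA: "finite A" and a0: "a0 \<in> A"
    and bal: "\<And>z. card {a\<in>A. h a = z} = card {a\<in>A. t a = z}"
    and cut: "\<And>U. a0 \<in> U \<Longrightarrow> U \<subseteq> A \<Longrightarrow> U \<noteq> A \<Longrightarrow> \<exists>x\<in>U. \<exists>y\<in>A-U. t x = h y"
  shows "\<exists>W. distinct W \<and> set W = A \<and> hd W = a0 \<and> closed_chain (\<lambda>x y. t x = h y) W"
proof -
  let ?R = "\<lambda>x y. t x = h y"
  have "chain_through ?R A a0 [a0]" using a0 by (simp add: chain_through_def)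
  moreover have "length W < Suc (card A)" if "chain_through ?R A a0 W" for W
  proof -
    have "length W = card (set W)" using that by (simp add: chain_through_def distinct_card)
    also have "\<dots> \<le> card A" using that finA by (simp add: chain_through_def card_mono)
    finally show ?thesis by simp
  qed
  ultimately have "\<exists>W. chain_through ?R A a0 W \<and> (\<forall>W'. chain_through ?R A a0 W' \<longrightarrow> length W' \<le> length W)"
    by (intro Lattices_Big.ex_has_greatest_nat[where b = "Suc (card A)"]) blast+
  then obtain W where W: "chain_through ?R A a0 W"
    and longest: "\<And>W'. chain_through ?R A a0 W' \<Longrightarrow> length W' \<le> length W"
    by blast
  have closed: "closed_chain ?R W"
    using longest_chain_closed[OF finA bal W longest] W by (auto simp: closed_chain_def chain_through_def)
  have cover: "set W = A" by (rule longest_closed_chain_covers[OF cut W closed longest])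
  obtain j where j: "j < length W" "W ! j = a0" using a0 cover by (metis in_set_conv_nth)
  show ?thesis
  proof (intro exI conjI)
    show "hd (rotate j W) = a0" using j
      by (simp add: rotate_drop_take hd_append hd_drop_conv_nth)
    show "closed_chain ?R (rotate j W)" by (rule closed_chain_rotate[OF closed])
    show "distinct (rotate j W)" "set (rotate j W) = A" using W cover by (auto simp: chain_through_def)
  qed
qed

text \<open>Redirecting the head of a0
  to that of a1 reduces this to the circuit case on A - {a1}; a1 is then appended.\<close>
lemma euler_trail:
  fixes A :: "'a set" and h t :: "'a \<Rightarrow> 'b"
  assumes finA: "finite A" and a0: "a0 \<in> A" and a1: "a1 \<in> A" and a01: "a0 \<noteq> a1"
    and bal: "\<And>z. card {a\<in>A-{a0}. h a = z} = card {a\<in>A-{a1}. t a = z}"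
    and cut: "\<And>U. a0 \<in> U \<Longrightarrow> U \<subseteq> A-{a1} \<Longrightarrow> U \<noteq> A-{a1} \<Longrightarrow> \<exists>x\<in>U. \<exists>y\<in>(A-{a1})-U. t x = h y"
  shows "\<exists>L. distinct L \<and> set L = A \<and> hd L = a0 \<and> last L = a1 \<and> successively (\<lambda>x y. t x = h y) L"
proof -
  define h' where "h' = h(a0 := h a1)"
  have bal': "card {a\<in>A-{a1}. h' a = z} = card {a\<in>A-{a1}. t a = z}" for z
  proof -
    define B where "B = {a\<in>A-{a0,a1}. h a = z}"
    have "{a\<in>A-{a1}. h' a = z} = (if h a1 = z then insert a0 B else B)"
      "{a\<in>A-{a0}. h a = z} = (if h a1 = z then insert a1 B else B)"
      using a0 a1 a01 by (auto simp: B_def h'_def)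
    moreover have "finite B" "a0 \<notin> B" "a1 \<notin> B" using finA by (auto simp: B_def)
    ultimately show ?thesis using bal[of z] by (cases "h a1 = z") simp_all
  qed
  have cut': "\<exists>x\<in>U. \<exists>y\<in>(A-{a1})-U. t x = h' y"
    if "a0 \<in> U" "U \<subseteq> A-{a1}" "U \<noteq> A-{a1}" for U
    using cut[OF that] that(1) by (auto simp: h'_def)
  obtain W where W: "distinct W" "set W = A-{a1}" "hd W = a0" "closed_chain (\<lambda>x y. t x = h' y) W"
    using euler_circuit[of "A-{a1}" a0 h' t, OF _ _ bal' cut'] finA a0 a01 by blast
  obtain W'' where W'': "W = a0 # W''" using W(3,4) by (cases W) (auto simp: closed_chain_def)
  have agree: "h' y = h y" if "y \<in> set W''" for y
    using that W(1) W'' by (auto simp: h'_def)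
  have chain': "successively (\<lambda>x y. t x = h' y) (a0 # W'')"
    using W(4) W'' by (simp add: closed_chain_def)
  have chain: "successively (\<lambda>x y. t x = h y) W"
  proof (cases W'')
    case (Cons b bs)
    have "successively (\<lambda>x y. t x = h' y) W'' = successively (\<lambda>x y. t x = h y) W''"
      by (rule successively_cong) (simp_all add: agree)
    moreover have "t a0 = h b" using chain' Cons agree[of b] by simp
    ultimately show ?thesis using chain' W'' Cons by simp
  qed (use W'' in simp)
  have "t (last W) = h a1" using W(3,4) by (simp add: closed_chain_def h'_def)
  then have "successively (\<lambda>x y. t x = h y) (W @ [a1])"
    using chain by (simp add: successively_append_iff)
  then show ?thesis using W a1 W'' by (intro exI[of _ "W @ [a1]"]) auto
qed

section \<open>Lists: consecutive elements, induced orders, prescribed ends\<close>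

definition consec :: "'a list \<Rightarrow> 'a \<Rightarrow> 'a \<Rightarrow> bool" where
  "consec xs a b \<longleftrightarrow> (\<exists>i. Suc i < length xs \<and> xs ! i = a \<and> xs ! Suc i = b)"

lemma consec_mem: "consec xs a b \<Longrightarrow> a \<in> set xs \<and> b \<in> set xs"
  by (auto simp: consec_def)

lemma consec_unique_succ: "distinct xs \<Longrightarrow> consec xs a b \<Longrightarrow> consec xs a b' \<Longrightarrow> b = b'"
  unfolding consec_def using nth_eq_iff_index_eq by (metis Suc_lessD)

lemma consec_unique_pred: "distinct xs \<Longrightarrow> consec xs a b \<Longrightarrow> consec xs a' b \<Longrightarrow> a = a'"
  unfolding consec_def using nth_eq_iff_index_eq by (metis Suc_lessD Suc_inject)

lemma consec_not_last: "distinct xs \<Longrightarrow> consec xs a b \<Longrightarrow> a \<noteq> last xs"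
proof
  assume d: "distinct xs" and c: "consec xs a b" and e: "a = last xs"
  then obtain i where i: "Suc i < length xs" "xs ! i = a" by (auto simp: consec_def)
  have "xs \<noteq> []" using i by auto
  hence "last xs = xs ! (length xs - 1)" by (simp add: last_conv_nth)
  hence "xs ! i = xs ! (length xs - 1)" using i e by simp
  hence "i = length xs - 1" using d i by (simp add: nth_eq_iff_index_eq)
  thus False using i by simp
qed

lemma consec_not_hd: "distinct xs \<Longrightarrow> consec xs a b \<Longrightarrow> b \<noteq> hd xs"
proof
  assume d: "distinct xs" and c: "consec xs a b" and e: "b = hd xs"
  then obtain i where i: "Suc i < length xs" "xs ! Suc i = b" by (auto simp: consec_def)
  have "xs \<noteq> []" using i by auto
  hence "hd xs = xs ! 0" by (simp add: hd_conv_nth)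
  hence "xs ! Suc i = xs ! 0" using i e by simp
  moreover have "(xs ! Suc i = xs ! 0) = (Suc i = 0)" by (rule nth_eq_iff_index_eq[OF d]) (use i in auto)
  ultimately show False by simp
qed

lemma consec_exists_succ: "a \<in> set xs \<Longrightarrow> a \<noteq> last xs \<Longrightarrow> \<exists>b. consec xs a b"
proof -
  assume a: "a \<in> set xs" "a \<noteq> last xs"
  then obtain i where i: "i < length xs" "xs ! i = a" by (meson in_set_conv_nth)
  have "i \<noteq> length xs - 1" using i a by (metis last_conv_nth list.size(3) not_less0)
  hence "Suc i < length xs" using i by simp
  thus ?thesis using i unfolding consec_def by blast
qed

lemma consec_exists_pred: "b \<in> set xs \<Longrightarrow> b \<noteq> hd xs \<Longrightarrow> \<exists>a. consec xs a b"
proof -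
  assume a: "b \<in> set xs" "b \<noteq> hd xs"
  then obtain j where j: "j < length xs" "xs ! j = b" by (meson in_set_conv_nth)
  have "j \<noteq> 0" using j a by (metis hd_conv_nth list.size(3) not_less0)
  then obtain i where "j = Suc i" by (cases j) auto
  thus ?thesis using j unfolding consec_def by blast
qed

lemma consec_successively: "successively P xs \<Longrightarrow> consec xs a b \<Longrightarrow> P a b"
  unfolding consec_def using successively_nth by blast

lemma consec_rev: "consec (rev xs) a b \<longleftrightarrow> consec xs b a"
proof -
  have "consec (rev ys) a b \<Longrightarrow> consec ys b a" for ys :: "'a list" and a b
  proof -
    assume "consec (rev ys) a b"
    then obtain i where i: "Suc i < length ys" "rev ys ! i = a" "rev ys ! Suc i = b"
      by (auto simp: consec_def)
    define j where "j = length ys - Suc (Suc i)"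
    have "ys ! j = b" "ys ! Suc j = a" "Suc j < length ys"
      using i by (auto simp: rev_nth j_def Suc_diff_Suc)
    then show "consec ys b a" unfolding consec_def by blast
  qed
  from this[of xs a b] this[of "rev xs" b a] show ?thesis by auto
qed

definition idx :: "'a list \<Rightarrow> 'a \<Rightarrow> nat" where
  "idx xs a = (LEAST i. i < length xs \<and> xs ! i = a)"

definition list_order :: "'a list \<Rightarrow> 'a rel" where
  "list_order xs = {(a, b). a \<in> set xs \<and> b \<in> set xs \<and> idx xs a \<le> idx xs b}"

lemma idx: "a \<in> set xs \<Longrightarrow> idx xs a < length xs \<and> xs ! idx xs a = a"
  unfolding idx_def by (rule LeastI_ex) (simp add: in_set_conv_nth)

lemma idx_nth: "distinct xs \<Longrightarrow> i < length xs \<Longrightarrow> idx xs (xs ! i) = i"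
  unfolding idx_def by (rule Least_equality) (auto simp: nth_eq_iff_index_eq)

lemma idx_inj: "a \<in> set xs \<Longrightarrow> b \<in> set xs \<Longrightarrow> idx xs a = idx xs b \<Longrightarrow> a = b"
  by (metis idx)

lemma linear_list_order: "linear_order_on (set xs) (list_order xs)"
  unfolding list_order_def linear_order_on_def partial_order_on_def preorder_on_def refl_on_def
    trans_def antisym_def total_on_def
  using idx_inj by (auto intro: order_trans le_antisym)

lemma list_order_greatest:
  assumes d: "distinct xs" and a: "a \<in> set xs"
  shows "(\<forall>b\<in>set xs. (b, a) \<in> list_order xs) \<longleftrightarrow> a = last xs"
proof -
  have ne: "xs \<noteq> []" using a by auto
  have last: "idx xs (last xs) = length xs - 1"
    using idx_nth[OF d, of "length xs - 1"] ne by (simp add: last_conv_nth)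
  have bound: "idx xs b \<le> length xs - 1" if "b \<in> set xs" for b
    using idx[OF that] by linarith
  show ?thesis
  proof
    assume "\<forall>b\<in>set xs. (b, a) \<in> list_order xs"
    then have "idx xs (last xs) \<le> idx xs a" using ne by (simp add: list_order_def)
    then have "idx xs a = idx xs (last xs)" using bound[OF a] last by simp
    then show "a = last xs" using idx_inj[OF a last_in_set[OF ne]] by simp
  qed (use bound last ne in \<open>auto simp: list_order_def\<close>)
qed

lemma list_order_least:
  assumes d: "distinct xs" and a: "a \<in> set xs"
  shows "(\<forall>b\<in>set xs. (a, b) \<in> list_order xs) \<longleftrightarrow> a = hd xs"
proof -
  have ne: "xs \<noteq> []" using a by auto
  have first: "idx xs (hd xs) = 0" using idx_nth[OF d, of 0] ne by (simp add: hd_conv_nth)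
  show ?thesis
  proof
    assume "\<forall>b\<in>set xs. (a, b) \<in> list_order xs"
    then have "idx xs a \<le> idx xs (hd xs)" using ne by (simp add: list_order_def)
    then have "idx xs a = idx xs (hd xs)" using first by simp
    then show "a = hd xs" using idx_inj[OF a hd_in_set[OF ne]] by simp
  qed (use first ne in \<open>auto simp: list_order_def\<close>)
qed

lemma consec_list_order_cover:
  assumes d: "distinct xs" and c: "consec xs a b"
  shows "(a, b) \<in> list_order xs" "a \<noteq> b"
    "\<And>c. (a, c) \<in> list_order xs \<Longrightarrow> (c, b) \<in> list_order xs \<Longrightarrow> c = a \<or> c = b"
proof -
  obtain i where i: "Suc i < length xs" "xs ! i = a" "xs ! Suc i = b"
    using c by (auto simp: consec_def)
  have ia: "idx xs a = i" and ib: "idx xs b = Suc i" using idx_nth[OF d] i by auto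
  show "(a, b) \<in> list_order xs" "a \<noteq> b" using i ia ib by (auto simp: list_order_def)
  fix c assume "(a, c) \<in> list_order xs" "(c, b) \<in> list_order xs"
  then have "c \<in> set xs" "idx xs c = i \<or> idx xs c = Suc i" using ia ib by (auto simp: list_order_def)
  then show "c = a \<or> c = b" using idx[of c xs] i by auto
qed

lemma list_with_ends:
  assumes "finite S" "a \<in> S" "b \<in> S" "a \<noteq> b"
  shows "\<exists>xs. distinct xs \<and> set xs = S \<and> hd xs = a \<and> last xs = b"
proof -
  obtain ys where "distinct ys" "set ys = S - {a, b}"
    using finite_distinct_list[of "S - {a, b}"] assms(1) by auto
  then show ?thesis using assms by (intro exI[of _ "a # ys @ [b]"]) auto
qed

lemma list_with_optional_ends:
  assumes S: "finite S" "2 \<le> card S"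
    and a: "A \<Longrightarrow> a \<in> S" and b: "B \<Longrightarrow> b \<in> S" and ab: "A \<Longrightarrow> B \<Longrightarrow> a \<noteq> b"
  shows "\<exists>xs. distinct xs \<and> set xs = S \<and> (A \<longrightarrow> hd xs = a) \<and> (B \<longrightarrow> last xs = b)"
proof -
  obtain x y where xy: "x \<in> S" "y \<in> S" "x \<noteq> y"
    using S by (metis One_nat_def card.empty card_le_Suc0_iff_eq not_less_eq_eq numeral_2_eq_2 zero_le)
  have other: "\<exists>z\<in>S. z \<noteq> c" for c using xy by (cases "c = x") auto
  have "\<exists>a' b'. a' \<in> S \<and> b' \<in> S \<and> a' \<noteq> b' \<and> (A \<longrightarrow> a' = a) \<and> (B \<longrightarrow> b' = b)"
    using a b ab xy other[of a] other[of b] by (cases A; cases B) blast+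
  then show ?thesis using list_with_ends[OF S(1)] by metis
qed

section \<open>The path space\<close>

lemma path_space_edge:
  "x \<in> path_space E s r \<Longrightarrow> x i \<in> E (Suc i) \<and> r (Suc i) (x i) = s (Suc (Suc i)) (x (Suc i))"
  by (simp add: path_space_def)

lemma topspace_path_top: "topspace (path_top E s r) = path_space E s r"
  unfolding path_top_def by (auto simp: path_space_def PiE_UNIV_domain)

lemma cylinder_open:
  assumes x: "x \<in> path_space E s r"
  shows "openin (path_top E s r) {y \<in> path_space E s r. \<forall>j<n. y j = x j}"
proof -
  define P where "P = product_topology (\<lambda>i. discrete_topology (E (Suc i))) (UNIV :: nat set)"
  have U: "openin P {y \<in> topspace P. \<forall>j<n. y j = x j}"
  proof (induction n)
    case 0 then show ?case by simp
  next
    case (Suc n)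
    have xn: "x n \<in> E (Suc n)" using x by (simp add: path_space_def)
    have cm: "continuous_map P (discrete_topology (E (Suc n))) (\<lambda>y. y n)"
      unfolding P_def by (rule continuous_map_product_projection) simp
    have op: "openin (discrete_topology (E (Suc n))) {x n}" using xn by simp
    have "openin P {y \<in> topspace P. y n \<in> {x n}}" by (rule openin_continuous_map_preimage[OF cm op])
    hence "openin P ({y \<in> topspace P. \<forall>j<n. y j = x j} \<inter> {y \<in> topspace P. y n \<in> {x n}})"
      using Suc.IH by (rule openin_Int[rotated])
    moreover have "{y \<in> topspace P. \<forall>j<n. y j = x j} \<inter> {y \<in> topspace P. y n \<in> {x n}}
        = {y \<in> topspace P. \<forall>j<Suc n. y j = x j}" by (auto simp: less_Suc_eq)
    ultimately show ?case by simp
  qed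
  have sub: "path_space E s r \<subseteq> topspace P" by (auto simp: P_def path_space_def PiE_UNIV_domain)
  have "{y \<in> path_space E s r. \<forall>j<n. y j = x j} = {y \<in> topspace P. \<forall>j<n. y j = x j} \<inter> path_space E s r"
    using sub by auto
  thus ?thesis unfolding path_top_def openin_subtopology P_def[symmetric] using U by blast
qed

lemma continuous_map_by_cylinders:
  assumes maps: "\<And>x. x \<in> path_space E s r \<Longrightarrow> f x \<in> path_space E s r"
    and loc: "\<And>x i. x \<in> path_space E s r \<Longrightarrow> \<exists>n. \<forall>y\<in>path_space E s r. (\<forall>j<n. y j = x j) \<longrightarrow> f y i = f x i"
  shows "continuous_map (path_top E s r) (path_top E s r) f"
proof -
  have T: "topspace (path_top E s r) = path_space E s r" by (rule topspace_path_top)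
  have comp: "continuous_map (path_top E s r) (discrete_topology (E (Suc k))) (\<lambda>x. f x k)" for k
    unfolding continuous_map
  proof (intro conjI allI impI)
    have "f x k \<in> E (Suc k)" if "x \<in> path_space E s r" for x
      using maps[OF that] unfolding path_space_def by blast
    then show "(\<lambda>x. f x k) ` topspace (path_top E s r) \<subseteq> topspace (discrete_topology (E (Suc k)))"
      unfolding T by auto
    fix U assume "openin (discrete_topology (E (Suc k))) U"
    show "openin (path_top E s r) {x \<in> topspace (path_top E s r). f x k \<in> U}"
      unfolding T
    proof (subst openin_subopen, intro ballI)
      fix x assume xin: "x \<in> {x \<in> path_space E s r. f x k \<in> U}"
      hence x: "x \<in> path_space E s r" "f x k \<in> U" by auto
      obtain n where n: "\<forall>y\<in>path_space E s r. (\<forall>j<n. y j = x j) \<longrightarrow> f y k = f x k"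
        using loc[OF x(1)] by blast
      have sub: "{y \<in> path_space E s r. \<forall>j<n. y j = x j} \<subseteq> {x \<in> path_space E s r. f x k \<in> U}"
        using n x(2) by auto
      have xi: "x \<in> {y \<in> path_space E s r. \<forall>j<n. y j = x j}" using x(1) by simp
      show "\<exists>T. openin (path_top E s r) T \<and> x \<in> T \<and> T \<subseteq> {x \<in> path_space E s r. f x k \<in> U}"
        using cylinder_open[OF x(1), of n] xi sub by blast
    qed
  qed
  have "continuous_map (path_top E s r) (product_topology (\<lambda>i. discrete_topology (E (Suc i))) UNIV) f"
    unfolding continuous_map_componentwise_UNIV using comp by blast
  moreover have "f \<in> topspace (path_top E s r) \<rightarrow> path_space E s r" using maps unfolding T by blast
  ultimately have "continuous_map (path_top E s r) (subtopology (product_topology (\<lambda>i. discrete_topology (E (Suc i))) UNIV) (path_space E s r)) f"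
    using continuous_map_in_subtopology by blast
  then show ?thesis unfolding path_top_def .
qed

section \<open>Ordering the edges into one vertex\<close>

lemma sum_incid_t_card:
  assumes fin: "finite (E (Suc n))" and W: "finite W"
    and f: "f (Suc n) u \<in> E (Suc n)" "r (Suc n) (f (Suc n) u) = u"
  shows "(\<Sum>w\<in>W. incid_t E s r f n u w) =
     card {e \<in> E (Suc n). r (Suc n) e = u \<and> e \<noteq> f (Suc n) u \<and> s (Suc n) e \<in> W}"
proof -
  define S where "S w = {e \<in> E (Suc n). s (Suc n) e = w \<and> r (Suc n) e = u \<and> e \<noteq> f (Suc n) u}" for w
  have eq: "incid_t E s r f n u w = card (S w)" for w
  proof (cases "s (Suc n) (f (Suc n) u) = w")
    case True
    have "S w = {e \<in> E (Suc n). s (Suc n) e = w \<and> r (Suc n) e = u} - {f (Suc n) u}"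
      by (auto simp: S_def)
    moreover have "f (Suc n) u \<in> {e \<in> E (Suc n). s (Suc n) e = w \<and> r (Suc n) e = u}"
      using f True by simp
    ultimately show ?thesis using fin True by (simp add: incid_t_def incid_def card_Diff_singleton)
  next
    case False
    then have "S w = {e \<in> E (Suc n). s (Suc n) e = w \<and> r (Suc n) e = u}" by (auto simp: S_def)
    then show ?thesis using False by (simp add: incid_t_def incid_def)
  qed
  have "(\<Sum>w\<in>W. incid_t E s r f n u w) = card (\<Union>w\<in>W. S w)"
    unfolding eq by (rule card_UN_disjoint[symmetric]) (use W fin in \<open>auto simp: S_def\<close>)
  also have "(\<Union>w\<in>W. S w) = {e \<in> E (Suc n). r (Suc n) e = u \<and> e \<noteq> f (Suc n) u \<and> s (Suc n) e \<in> W}"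
    by (auto simp: S_def)
  finally show ?thesis .
qed

text \<open>
  One level of the diagram seen from a vertex u: the edges A = r^{-1}(u) into u, with the two
  distinguished edges eb (to become the minimal edge) and et (to become the maximal edge).  An
  edge e entering u is labelled by the cell [vb(s e), vt(s e)] of its source; it may be followed
  by e' in the order of A iff sigma(vt(s e)) = vb(s e'), i.e. iff the cell of e has an edge to the
  cell of e' in the graph H.  The ordering of A is an Euler trail for these labels.\<close>
locale level_at_vertex =
  fixes V :: "'v set" and E :: "nat \<Rightarrow> 'e set" and s r :: "nat \<Rightarrow> 'e \<Rightarrow> 'v"
    and Vt Vb :: "'v set" and vt vb :: "'v \<Rightarrow> 'v" and et eb :: "nat \<Rightarrow> 'v \<Rightarrow> 'e"
    and \<sigma> :: "'v \<Rightarrow> 'v" and n :: nat and u :: 'v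
  assumes finV: "finite V" and finE: "finite (E (Suc n))"
    and src: "\<And>e. e \<in> E (Suc n) \<Longrightarrow> s (Suc n) e \<in> V" and u: "u \<in> V"
    and labels: "\<And>w. w \<in> V \<Longrightarrow> vt w \<in> Vt \<and> vb w \<in> Vb"
    and sigma: "bij_betw \<sigma> Vt Vb"
    and et: "et (Suc n) u \<in> rinv E r (Suc n) u" and eb: "eb (Suc n) u \<in> rinv E r (Suc n) u"
    and et_eb: "et (Suc n) u \<noteq> eb (Suc n) u"
begin

abbreviation in_edges :: "'e set" where "in_edges \<equiv> rinv E r (Suc n) u"
abbreviation first_edge :: 'e where "first_edge \<equiv> eb (Suc n) u"
abbreviation last_edge :: 'e where "last_edge \<equiv> et (Suc n) u"

abbreviation lab_in :: "'e \<Rightarrow> 'v" where "lab_in e \<equiv> vb (s (Suc n) e)"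
abbreviation lab_out :: "'e \<Rightarrow> 'v" where "lab_out e \<equiv> \<sigma> (vt (s (Suc n) e))"
abbreviation cell_of :: "'e \<Rightarrow> 'v \<times> 'v" where "cell_of e \<equiv> (vb (s (Suc n) e), vt (s (Suc n) e))"

lemma finite_in_edges: "finite in_edges"
  using finE by (simp add: rinv_def)

lemma in_edges_src: "e \<in> in_edges \<Longrightarrow> s (Suc n) e \<in> V"
  using src by (simp add: rinv_def)

lemma sum_incid_t_et: "W \<subseteq> V \<Longrightarrow>
    (\<Sum>w\<in>W. incid_t E s r et n u w) = card {e \<in> in_edges - {last_edge}. s (Suc n) e \<in> W}"
  using sum_incid_t_card[where E=E and n=n and W=W and f=et and u=u and s=s and r=r] finE finV et
  by (simp add: rinv_def finite_subset set_diff_eq conj_commute conj_left_commute)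

lemma sum_incid_t_eb: "W \<subseteq> V \<Longrightarrow>
    (\<Sum>w\<in>W. incid_t E s r eb n u w) = card {e \<in> in_edges - {first_edge}. s (Suc n) e \<in> W}"
  using sum_incid_t_card[where E=E and n=n and W=W and f=eb and u=u and s=s and r=r] finE finV eb
  by (simp add: rinv_def finite_subset set_diff_eq conj_commute conj_left_commute)

text \<open>The balance relations at u say exactly that the labels are balanced in the sense of
  Euler's theorem for trails from first_edge to last_edge.\<close>
lemma labels_balanced:
  assumes bal: "\<forall>t\<in>Vt. (\<Sum>w\<in>{w\<in>V. vt w = t}. incid_t E s r et n u w)
                       = (\<Sum>w\<in>{w\<in>V. vb w = \<sigma> t}. incid_t E s r eb n u w)"
  shows "card {a\<in>in_edges - {first_edge}. lab_in a = z} = card {a\<in>in_edges - {last_edge}. lab_out a = z}"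
proof (cases "z \<in> Vb")
  case True
  define t where "t = inv_into Vt \<sigma> z"
  have t: "t \<in> Vt" "\<sigma> t = z"
    using True sigma by (auto simp: t_def bij_betw_def inv_into_into f_inv_into_f)
  have "{a\<in>in_edges - {last_edge}. lab_out a = z} = {e \<in> in_edges - {last_edge}. s (Suc n) e \<in> {w\<in>V. vt w = t}}"
    using t sigma labels in_edges_src by (auto simp: bij_betw_def inj_on_def)
  moreover have "{a\<in>in_edges - {first_edge}. lab_in a = z} = {e \<in> in_edges - {first_edge}. s (Suc n) e \<in> {w\<in>V. vb w = \<sigma> t}}"
    using t in_edges_src by auto
  ultimately show ?thesis
    using bal t sum_incid_t_et[of "{w\<in>V. vt w = t}"] sum_incid_t_eb[of "{w\<in>V. vb w = \<sigma> t}"] by auto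
next
  case False
  then have "{a\<in>in_edges - {first_edge}. lab_in a = z} = {}" "{a\<in>in_edges - {last_edge}. lab_out a = z} = {}"
    using labels in_edges_src sigma by (auto simp: bij_betw_def)
  then show ?thesis by (simp only:)
qed

lemma crossing_card: "crossing V E s r vt vb et n u p = card {e \<in> in_edges - {last_edge}. cell_of e = p}"
proof -
  have "cell V vt vb (fst p) (snd p) \<subseteq> V" by (auto simp: cell_def)
  from sum_incid_t_et[OF this]
  have "crossing V E s r vt vb et n u p = card {e \<in> in_edges - {last_edge}. s (Suc n) e \<in> cell V vt vb (fst p) (snd p)}"
    by (simp add: crossing_def)
  also have "{e \<in> in_edges - {last_edge}. s (Suc n) e \<in> cell V vt vb (fst p) (snd p)}
      = {e \<in> in_edges - {last_edge}. cell_of e = p}"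
    using in_edges_src by (auto simp: cell_def)
  finally show ?thesis .
qed

lemma positive_cell_iff:
  "p \<in> H_verts V Vt Vb vt vb \<and> 0 < crossing V E s r vt vb et n u p \<longleftrightarrow>
     (\<exists>e\<in>in_edges - {last_edge}. cell_of e = p)"
proof -
  have "cell_of e \<in> H_verts V Vt Vb vt vb" if "e \<in> in_edges" for e
    using that in_edges_src[of e] labels[of "s (Suc n) e"] by (auto simp: H_verts_def cell_def)
  then show ?thesis
    unfolding crossing_card using finite_in_edges by (auto simp: card_gt_0_iff)
qed

text \<open>Positive strong connectivity and balance give the cut condition of Euler's theorem: a set U
  of edges containing first_edge but not all of in_edges - {last_edge} is left by some edge.
  Indeed, all cells reachable from the cell of first_edge carry an edge of U if U is never left,
  and the balance provides an edge whose label leads to that of an edge outside U.\<close>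
lemma labels_cut:
  assumes psc: "pos_strongly_connected V E s r Vt Vb vt vb et \<sigma> n"
    and bal: "\<And>z. card {a\<in>in_edges - {first_edge}. lab_in a = z} = card {a\<in>in_edges - {last_edge}. lab_out a = z}"
    and U: "first_edge \<in> U" "U \<subseteq> in_edges - {last_edge}" "U \<noteq> in_edges - {last_edge}"
  shows "\<exists>x\<in>U. \<exists>y\<in>(in_edges - {last_edge}) - U. lab_out x = lab_in y"
proof (rule ccontr)
  assume closed: "\<not> ?thesis"
  define T where "T = {p \<in> H_verts V Vt Vb vt vb. 0 < crossing V E s r vt vb et n u p}"
  define Rel where "Rel = H_edges V Vt Vb vt vb \<sigma> \<inter> T \<times> T"
  have T: "p \<in> T \<longleftrightarrow> (\<exists>e\<in>in_edges - {last_edge}. cell_of e = p)" for p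
    unfolding T_def using positive_cell_iff by simp
  have reach: "\<exists>x\<in>U. cell_of x = q" if "(cell_of first_edge, q) \<in> Rel\<^sup>*" for q
    using that
  proof (induction rule: rtrancl_induct)
    case (step p q)
    then obtain x where x: "x \<in> U" "cell_of x = p" by blast
    obtain y where y: "y \<in> in_edges - {last_edge}" "cell_of y = q"
      using step(2) T by (auto simp: Rel_def)
    have "lab_out x = lab_in y" using step(2) x y by (auto simp: Rel_def H_edges_def)
    then show ?case using closed x y by blast
  qed (use U in blast)
  obtain y where y: "y \<in> in_edges - {last_edge}" "y \<notin> U" using U by blast
  have "y \<in> {a\<in>in_edges - {first_edge}. lab_in a = lab_in y}" using y U by auto
  then have "card {a\<in>in_edges - {first_edge}. lab_in a = lab_in y} > 0"
    using finite_in_edges by (auto simp: card_gt_0_iff)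
  then have "card {a\<in>in_edges - {last_edge}. lab_out a = lab_in y} > 0"
    by (simp only: bal)
  then obtain a where a: "a \<in> in_edges - {last_edge}" "lab_out a = lab_in y"
    by (metis (mono_tags, lifting) card.empty empty_Collect_eq less_irrefl)
  have "cell_of first_edge \<in> T" "cell_of a \<in> T" using T a(1) U by blast+
  then have "(cell_of first_edge, cell_of a) \<in> Rel\<^sup>*"
    using psc u unfolding pos_strongly_connected_def Rel_def T_def Let_def by blast
  then obtain x where x: "x \<in> U" "cell_of x = cell_of a" using reach by blast
  then have "lab_out x = lab_in y" using a(2) by simp
  then show False using closed x(1) y by blast
qed

lemma euler_ordering:
  assumes psc: "pos_strongly_connected V E s r Vt Vb vt vb et \<sigma> n"
    and bal: "\<forall>t\<in>Vt. (\<Sum>w\<in>{w\<in>V. vt w = t}. incid_t E s r et n u w)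
                       = (\<Sum>w\<in>{w\<in>V. vb w = \<sigma> t}. incid_t E s r eb n u w)"
  shows "\<exists>xs. distinct xs \<and> set xs = in_edges \<and> hd xs = first_edge \<and> last xs = last_edge
     \<and> successively (\<lambda>e e'. lab_out e = lab_in e') xs"
  using euler_trail[OF finite_in_edges eb et et_eb[symmetric] labels_balanced[OF bal]
      labels_cut[OF psc labels_balanced[OF bal]]] .

end

section \<open>Orderings defined by linked lists\<close>
text \<open>
  Its Vershik map phi is defined explicitly; the reversed lists
  satisfy the same hypotheses for the dual skeleton (maximal and minimal roles swapped, sigma
  inverted), and the dual map psi is the inverse of phi.\<close>
locale edge_lists =
  fixes V :: "'v set" and E :: "nat \<Rightarrow> 'e set" and s r :: "nat \<Rightarrow> 'e \<Rightarrow> 'v"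
    and Vt Vb :: "'v set" and M m :: "'v \<Rightarrow> nat \<Rightarrow> 'e" and vt vb :: "'v \<Rightarrow> 'v"
    and et eb :: "nat \<Rightarrow> 'v \<Rightarrow> 'e" and \<sigma> :: "'v \<Rightarrow> 'v" and L :: "nat \<Rightarrow> 'v \<Rightarrow> 'e list" and K :: nat
  assumes range_V: "\<And>n e. 1 \<le> n \<Longrightarrow> e \<in> E n \<Longrightarrow> r n e \<in> V"
    and source_V: "\<And>n e. 2 \<le> n \<Longrightarrow> e \<in> E n \<Longrightarrow> s n e \<in> V"
    and skel: "skeleton V E s r Vt Vb M m vt vb et eb"
    and sigma: "bij_betw \<sigma> Vt Vb"
    and L_distinct: "\<And>n u. 1 \<le> n \<Longrightarrow> u \<in> V \<Longrightarrow> distinct (L n u)"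
    and L_set: "\<And>n u. 1 \<le> n \<Longrightarrow> u \<in> V \<Longrightarrow> set (L n u) = rinv E r n u"
    and L_nonempty: "\<And>n u. 1 \<le> n \<Longrightarrow> u \<in> V \<Longrightarrow> L n u \<noteq> []"
    and L1_last: "\<And>u. u \<in> Vt \<Longrightarrow> last (L 1 u) = M u 0"
    and L1_hd: "\<And>u. u \<in> Vb \<Longrightarrow> hd (L 1 u) = m u 0"
    and L_last: "\<And>n u. 2 \<le> n \<Longrightarrow> u \<in> V \<Longrightarrow> last (L n u) = et n u"
    and L_hd: "\<And>n u. 2 \<le> n \<Longrightarrow> u \<in> V \<Longrightarrow> hd (L n u) = eb n u"
    and L_linked: "\<And>n u. K \<le> n \<Longrightarrow> u \<in> V \<Longrightarrow> successively (\<lambda>e e'. \<sigma> (vt (s n e)) = vb (s n e')) (L n u)"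
    and K2: "2 \<le> K"
begin

lemma Vt_sub: "Vt \<subseteq> V" and Vb_sub: "Vb \<subseteq> V"
  using skel by (auto simp: skeleton_def)
lemma M_path: "t \<in> Vt \<Longrightarrow> M t \<in> path_space E s r" and M_range: "t \<in> Vt \<Longrightarrow> r (Suc i) (M t i) = t"
  using skel by (auto simp: skeleton_def)
lemma m_path: "t \<in> Vb \<Longrightarrow> m t \<in> path_space E s r" and m_range: "t \<in> Vb \<Longrightarrow> r (Suc i) (m t i) = t"
  using skel by (auto simp: skeleton_def)
lemma vt_in: "w \<in> V \<Longrightarrow> vt w \<in> Vt" and vb_in: "w \<in> V \<Longrightarrow> vb w \<in> Vb"
  using skel by (auto simp: skeleton_def)
lemma et_in: "2 \<le> n \<Longrightarrow> w \<in> V \<Longrightarrow> et n w \<in> E n \<and> r n (et n w) = w \<and> s n (et n w) = vt w"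
  using skel by (auto simp: skeleton_def rinv_def)
lemma eb_in: "2 \<le> n \<Longrightarrow> w \<in> V \<Longrightarrow> eb n w \<in> E n \<and> r n (eb n w) = w \<and> s n (eb n w) = vb w"
  using skel by (auto simp: skeleton_def rinv_def)
lemma et_on_M: "2 \<le> n \<Longrightarrow> w \<in> Vt \<Longrightarrow> et n w = M w (n - 1)"
  using skel Vt_sub by (auto simp: skeleton_def)
lemma eb_on_m: "2 \<le> n \<Longrightarrow> w \<in> Vb \<Longrightarrow> eb n w = m w (n - 1)"
  using skel Vb_sub by (auto simp: skeleton_def)
lemma M_source: "t \<in> Vt \<Longrightarrow> 1 \<le> j \<Longrightarrow> s (Suc j) (M t j) = t"
proof -
  assume t: "t \<in> Vt" and j: "1 \<le> j"
  then obtain j' where j': "j = Suc j'" by (cases j) auto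
  show ?thesis using path_space_edge[OF M_path[OF t], of j'] M_range[OF t, of j'] j' by simp
qed
lemma m_source: "t \<in> Vb \<Longrightarrow> 1 \<le> j \<Longrightarrow> s (Suc j) (m t j) = t"
proof -
  assume t: "t \<in> Vb" and j: "1 \<le> j"
  then obtain j' where j': "j = Suc j'" by (cases j) auto
  show ?thesis using path_space_edge[OF m_path[OF t], of j'] m_range[OF t, of j'] j' by simp
qed

text \<open>A vertex of Vt is its own label, since its edge et at level 2 lies on M t.\<close>
lemma vt_on_Vt: "t \<in> Vt \<Longrightarrow> vt t = t"
  using et_in[of 2 t] et_on_M[of 2 t] M_source[of t 1] Vt_sub by (auto simp: numeral_2_eq_2)
lemma L_mem: "1 \<le> n \<Longrightarrow> u \<in> V \<Longrightarrow> e \<in> set (L n u) \<longleftrightarrow> e \<in> E n \<and> r n e = u"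
  using L_set by (auto simp: rinv_def)

definition ismax :: "nat \<Rightarrow> 'e \<Rightarrow> bool" where
  "ismax n e \<longleftrightarrow> e \<in> E n \<and> e = last (L n (r n e))"
definition ismin :: "nat \<Rightarrow> 'e \<Rightarrow> bool" where
  "ismin n e \<longleftrightarrow> e \<in> E n \<and> e = hd (L n (r n e))"

lemma ismax_on_Vt: "t \<in> Vt \<Longrightarrow> ismax (Suc j) e \<Longrightarrow> r (Suc j) e = t \<Longrightarrow> e = M t j"
proof (cases j)
  case 0
  then show "t \<in> Vt \<Longrightarrow> ismax (Suc j) e \<Longrightarrow> r (Suc j) e = t \<Longrightarrow> e = M t j"
    using L1_last by (auto simp: ismax_def)
next
  case (Suc j')
  assume "t \<in> Vt" "ismax (Suc j) e" "r (Suc j) e = t"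
  then show ?thesis using L_last[of "Suc j" t] et_on_M[of "Suc j" t] Vt_sub Suc by (auto simp: ismax_def)
qed

lemma M_ismax: "t \<in> Vt \<Longrightarrow> ismax (Suc j) (M t j)"
proof -
  assume t: "t \<in> Vt"
  have E: "M t j \<in> E (Suc j)" using path_space_edge[OF M_path[OF t]] by blast
  have "M t j = last (L (Suc j) t)"
  proof (cases j)
    case 0 then show ?thesis using L1_last[OF t] by simp
  next
    case (Suc j') then show ?thesis using L_last[of "Suc j" t] et_on_M[of "Suc j" t] t Vt_sub by auto
  qed
  thus ?thesis unfolding ismax_def M_range[OF t] using E by simp
qed

text \<open>A path whose first k edges are maximal follows, below level k - 1, the path M t for
  t the label of its vertex at level k - 1: maximal edges come from the vt-label of their range.\<close>
lemma max_prefix_is_M: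
  assumes x: "x \<in> path_space E s r"
  shows "(\<forall>i<k. ismax (Suc i) (x i)) \<Longrightarrow> Suc j < k \<Longrightarrow>
     r (Suc j) (x j) = vt (r k (x (k - 1))) \<and> x j = M (vt (r k (x (k - 1)))) j"
proof (induction k arbitrary: j)
  case 0 then show ?case by simp
next
  case (Suc k)
  define u where "u = (\<lambda>i. r (Suc i) (x i))"
  have uV: "u i \<in> V" for i unfolding u_def by (rule range_V) (use path_space_edge[OF x, of i] in auto)
  have k1: "1 \<le> k" using Suc.prems by simp
  then obtain k' where k': "k = Suc k'" by (cases k) auto
  have xk: "ismax (Suc k) (x k)" using Suc.prems by simp
  have "x k = et (Suc k) (u k)" using xk L_last[of "Suc k" "u k"] uV k1 by (simp add: ismax_def u_def)
  hence "s (Suc k) (x k) = vt (u k)" using et_in[of "Suc k" "u k"] uV k1 by simp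
  moreover have "s (Suc k) (x k) = u k'" using path_space_edge[OF x, of k'] k' by (simp add: u_def)
  ultimately have ukk: "u k' = vt (u k)" by simp
  show ?case
  proof (cases "j = k'")
    case True
    have "x j = M (vt (u k)) j"
      using ismax_on_Vt[of "vt (u k)" j "x j"] Suc.prems True ukk vt_in[OF uV] k' by (simp add: u_def)
    then have "u j = vt (u k) \<and> x j = M (vt (u k)) j" using True ukk by simp
    then show ?thesis unfolding u_def diff_Suc_1 .
  next
    case False
    hence "Suc j < k" using Suc.prems k' by simp
    have pre: "\<forall>i<k. ismax (Suc i) (x i)" using Suc.prems by simp
    have IH: "u j = vt (u k') \<and> x j = M (vt (u k')) j"
      using Suc.IH[OF pre \<open>Suc j < k\<close>] unfolding u_def k' diff_Suc_1 .
    have "vt (u k') = vt (u k)" using ukk vt_on_Vt[OF vt_in[OF uV]] by simp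
    then have "u j = vt (u k) \<and> x j = M (vt (u k)) j" using IH by metis
    then show ?thesis unfolding u_def diff_Suc_1 .
  qed
qed

lemma max_prefix_paths: "{x \<in> path_space E s r. \<forall>i. ismax (Suc i) (x i)} = M ` Vt"
proof
  show "M ` Vt \<subseteq> {x \<in> path_space E s r. \<forall>i. ismax (Suc i) (x i)}"
    using M_path M_ismax by auto
next
  show "{x \<in> path_space E s r. \<forall>i. ismax (Suc i) (x i)} \<subseteq> M ` Vt"
  proof
    fix x assume "x \<in> {x \<in> path_space E s r. \<forall>i. ismax (Suc i) (x i)}"
    hence x: "x \<in> path_space E s r" and mx: "\<forall>i. ismax (Suc i) (x i)" by auto
    define u where "u = (\<lambda>i. r (Suc i) (x i))"
    have uV: "u i \<in> V" for i unfolding u_def by (rule range_V) (use path_space_edge[OF x, of i] in auto)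
    have A: "u j = vt (u (Suc j)) \<and> x j = M (vt (u (Suc j))) j" for j
      using max_prefix_is_M[OF x, of "Suc (Suc j)" j] mx unfolding u_def diff_Suc_1 by blast
    have ut: "u j \<in> Vt" for j using A[of j] vt_in[OF uV] by metis
    have uc: "u j = u (Suc j)" for j using A[of j] vt_on_Vt[OF ut[of "Suc j"]] by simp
    have u0: "u j = u 0" for j by (induction j) (use uc in auto)
    have "x j = M (u 0) j" for j using A[of j] vt_on_Vt[OF ut[of "Suc j"]] u0[of "Suc j"] by simp
    hence "x = M (u 0)" by auto
    thus "x \<in> M ` Vt" using ut[of 0] by blast
  qed
qed

fun min_path_to :: "nat \<Rightarrow> 'v \<Rightarrow> nat \<Rightarrow> 'e" where
  "min_path_to 0 w i = undefined"
| "min_path_to (Suc k) w i = (if i = k then hd (L (Suc k) w) else min_path_to k (s (Suc k) (hd (L (Suc k) w))) i)"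

fun max_path_to :: "nat \<Rightarrow> 'v \<Rightarrow> nat \<Rightarrow> 'e" where
  "max_path_to 0 w i = undefined"
| "max_path_to (Suc k) w i = (if i = k then last (L (Suc k) w) else max_path_to k (s (Suc k) (last (L (Suc k) w))) i)"

lemma hd_L: "1 \<le> n \<Longrightarrow> u \<in> V \<Longrightarrow> hd (L n u) \<in> E n \<and> r n (hd (L n u)) = u"
  using L_mem[of n u "hd (L n u)"] L_nonempty[of n u] by simp

lemma min_path_to_props:
  "w \<in> V \<Longrightarrow> (i < k \<longrightarrow> min_path_to k w i \<in> E (Suc i) \<and> ismin (Suc i) (min_path_to k w i))
     \<and> (k = Suc i \<longrightarrow> r k (min_path_to k w i) = w)
     \<and> (Suc i < k \<longrightarrow> r (Suc i) (min_path_to k w i) = s (Suc (Suc i)) (min_path_to k w (Suc i)))"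
proof (induction k arbitrary: w i)
  case 0 then show ?case by simp
next
  case (Suc k)
  define h where "h = hd (L (Suc k) w)"
  have h: "h \<in> E (Suc k)" "r (Suc k) h = w" using hd_L[of "Suc k" w] Suc.prems by (auto simp: h_def)
  have hmin: "ismin (Suc k) h" using h by (simp add: ismin_def h_def)
  show ?case
  proof (cases "i = k")
    case True then show ?thesis using h hmin by (simp add: h_def[symmetric])
  next
    case False
    show ?thesis
    proof (cases "i < k")
      case True
      hence k1: "2 \<le> Suc k" by simp
      have w': "s (Suc k) h \<in> V" using source_V[OF k1 h(1)] .
      note IH = Suc.IH[OF w', of i]
      have A: "min_path_to (Suc k) w i = min_path_to k (s (Suc k) h) i" using False by (simp add: h_def)
      have B: "Suc i < Suc k \<longrightarrow> r (Suc i) (min_path_to (Suc k) w i) = s (Suc (Suc i)) (min_path_to (Suc k) w (Suc i))"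
      proof (cases "Suc i = k")
        case True
        then show ?thesis using IH A h_def by simp
      next
        case False
        then have "Suc i < k" using True by simp
        moreover have "min_path_to (Suc k) w (Suc i) = min_path_to k (s (Suc k) h) (Suc i)"
          using \<open>Suc i < k\<close> by (simp add: h_def)
        ultimately show ?thesis using IH A by simp
      qed
      show ?thesis using IH A B True by simp
    next
      case False
      then show ?thesis using \<open>i \<noteq> k\<close> by simp
    qed
  qed
qed

text \<open>Below a vertex b of Vb it follows m b; below a level-k vertex w (k >= 2) it follows
  m (vb w), as the minimal edge into w comes from vb w.\<close>
lemma min_path_to_on_m: "b \<in> Vb \<Longrightarrow> i < k \<Longrightarrow> min_path_to k b i = m b i"
proof (induction k arbitrary: i)
  case 0 then show ?case by simp
next
  case (Suc k)
  have hd: "hd (L (Suc k) b) = m b k"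
  proof (cases k)
    case 0 then show ?thesis using L1_hd[OF Suc.prems(1)] by simp
  next
    case (Suc k') then show ?thesis using L_hd[of "Suc k" b] eb_on_m[of "Suc k" b] Suc.prems Vb_sub by auto
  qed
  show ?case
  proof (cases "i = k")
    case True then show ?thesis using hd by simp
  next
    case False
    hence ik: "i < k" using Suc.prems by simp
    hence "s (Suc k) (m b k) = b" using m_source[OF Suc.prems(1), of k] by simp
    then show ?thesis using Suc.IH[OF Suc.prems(1) ik] hd False by simp
  qed
qed

lemma min_path_to_eq_m: "w \<in> V \<Longrightarrow> Suc i < k \<Longrightarrow> min_path_to k w i = m (vb w) i"
proof -
  assume w: "w \<in> V" and ik: "Suc i < k"
  then obtain k' where k': "k = Suc k'" by (cases k) auto
  have k2: "2 \<le> Suc k'" using ik k' by simp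
  have "hd (L (Suc k') w) = eb (Suc k') w" using L_hd[OF k2 w] .
  hence "s (Suc k') (hd (L (Suc k') w)) = vb w" using eb_in[OF k2 w] by simp
  moreover have "i \<noteq> k'" "i < k'" using ik k' by auto
  ultimately show ?thesis using min_path_to_on_m[OF vb_in[OF w], of i k'] k' by simp
qed

lemma min_prefix_eq_min_path_to:
  assumes x: "x \<in> path_space E s r"
  shows "(\<forall>i<k. ismin (Suc i) (x i)) \<Longrightarrow> i < k \<Longrightarrow> x i = min_path_to k (s (Suc k) (x k)) i"
proof (induction k arbitrary: i)
  case 0 then show ?case by simp
next
  case (Suc k)
  have xk: "x k = hd (L (Suc k) (r (Suc k) (x k)))" using Suc.prems by (simp add: ismin_def)
  have rk: "r (Suc k) (x k) = s (Suc (Suc k)) (x (Suc k))" using path_space_edge[OF x] by blast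
  show ?case
  proof (cases "i = k")
    case True then show ?thesis using xk rk by simp
  next
    case False
    hence "i < k" using Suc.prems by simp
    hence "x i = min_path_to k (s (Suc k) (x k)) i" using Suc.IH Suc.prems by simp
    then show ?thesis using False xk rk by (metis min_path_to.simps(2))
  qed
qed

definition succ :: "nat \<Rightarrow> 'e \<Rightarrow> 'e" where
  "succ n e = (THE e'. consec (L n (r n e)) e e')"
definition pred :: "nat \<Rightarrow> 'e \<Rightarrow> 'e" where
  "pred n e = (THE e'. consec (L n (r n e)) e' e)"

lemma succ_props:
  assumes n: "1 \<le> n" and e: "e \<in> E n" and nm: "\<not> ismax n e"
  shows "consec (L n (r n e)) e (succ n e)" "succ n e \<in> E n" "r n (succ n e) = r n e"
    "\<not> ismin n (succ n e)" "pred n (succ n e) = e"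
proof -
  define u where "u = r n e"
  have u: "u \<in> V" using range_V[OF n e] by (simp add: u_def)
  have d: "distinct (L n u)" using L_distinct[OF n u] .
  have em: "e \<in> set (L n u)" using L_mem[OF n u] e u_def by blast
  have el: "e \<noteq> last (L n u)" using nm e unfolding ismax_def u_def by blast
  obtain b where b: "consec (L n u) e b" using consec_exists_succ[OF em el] by blast
  have sb: "succ n e = b" unfolding succ_def u_def[symmetric]
    by (rule the_equality[where P="\<lambda>x. consec (L n u) e x", OF b]) (rule consec_unique_succ[OF d b, symmetric])
  show "consec (L n (r n e)) e (succ n e)" using b sb u_def by simp
  have bm: "b \<in> set (L n u)" using consec_mem[OF b] by blast
  have bE: "b \<in> E n" and rb: "r n b = u" using L_mem[OF n u] bm by auto
  show "succ n e \<in> E n" "r n (succ n e) = r n e" using bE rb sb u_def by auto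
  have "b \<noteq> hd (L n u)" by (rule consec_not_hd[OF d b])
  then show "\<not> ismin n (succ n e)" unfolding ismin_def sb rb by blast
  show "pred n (succ n e) = e" unfolding pred_def sb rb
    by (rule the_equality[where P="\<lambda>x. consec (L n u) x b", OF b]) (rule consec_unique_pred[OF d b, symmetric])
qed

lemma pred_props:
  assumes n: "1 \<le> n" and e: "e \<in> E n" and nm: "\<not> ismin n e"
  shows "consec (L n (r n e)) (pred n e) e" "pred n e \<in> E n" "r n (pred n e) = r n e"
    "\<not> ismax n (pred n e)" "succ n (pred n e) = e"
proof -
  define u where "u = r n e"
  have u: "u \<in> V" using range_V[OF n e] by (simp add: u_def)
  have d: "distinct (L n u)" using L_distinct[OF n u] .
  have em: "e \<in> set (L n u)" using L_mem[OF n u] e u_def by blast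
  have el: "e \<noteq> hd (L n u)" using nm e unfolding ismin_def u_def by blast
  obtain b where b: "consec (L n u) b e" using consec_exists_pred[OF em el] by blast
  have sb: "pred n e = b" unfolding pred_def u_def[symmetric]
    by (rule the_equality[where P="\<lambda>x. consec (L n u) x e", OF b]) (rule consec_unique_pred[OF d b, symmetric])
  show "consec (L n (r n e)) (pred n e) e" using b sb u_def by simp
  have bm: "b \<in> set (L n u)" using consec_mem[OF b] by blast
  have bE: "b \<in> E n" and rb: "r n b = u" using L_mem[OF n u] bm by auto
  show "pred n e \<in> E n" "r n (pred n e) = r n e" using bE rb sb u_def by auto
  have "b \<noteq> last (L n u)" by (rule consec_not_last[OF d b])
  then show "\<not> ismax n (pred n e)" unfolding ismax_def sb rb by blast
  show "succ n (pred n e) = e" unfolding succ_def sb rb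
    by (rule the_equality[where P="\<lambda>x. consec (L n u) b x", OF b]) (rule consec_unique_succ[OF d b, symmetric])
qed

definition first_nonmax :: "(nat \<Rightarrow> 'e) \<Rightarrow> nat" where
  "first_nonmax x = (LEAST i. \<not> ismax (Suc i) (x i))"

definition phi :: "(nat \<Rightarrow> 'e) \<Rightarrow> nat \<Rightarrow> 'e" where
  "phi x = (if (\<forall>i. ismax (Suc i) (x i)) then m (\<sigma> (r 1 (x 0)))
     else (\<lambda>i. if first_nonmax x < i then x i else if i = first_nonmax x then succ (Suc (first_nonmax x)) (x (first_nonmax x))
         else min_path_to (first_nonmax x) (s (Suc (first_nonmax x)) (succ (Suc (first_nonmax x)) (x (first_nonmax x)))) i))"

lemma first_nonmax_props: "\<not> (\<forall>i. ismax (Suc i) (x i)) \<Longrightarrow>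
    \<not> ismax (Suc (first_nonmax x)) (x (first_nonmax x)) \<and> (\<forall>i<first_nonmax x. ismax (Suc i) (x i))"
proof -
  assume "\<not> (\<forall>i. ismax (Suc i) (x i))"
  then have ex: "\<exists>i. \<not> ismax (Suc i) (x i)" by blast
  show ?thesis unfolding first_nonmax_def using LeastI_ex[OF ex] not_less_Least by blast
qed

lemma first_nonmax_eq: "\<not> ismax (Suc k) (x k) \<Longrightarrow> \<forall>i<k. ismax (Suc i) (x i) \<Longrightarrow> first_nonmax x = k"
  unfolding first_nonmax_def by (rule Least_equality) (auto simp: not_less[symmetric])

lemma phi_nonmax:
  assumes x: "x \<in> path_space E s r" and nm: "\<not> (\<forall>i. ismax (Suc i) (x i))"
  defines "k \<equiv> first_nonmax x"
  shows "phi x k = succ (Suc k) (x k)" "\<And>i. k < i \<Longrightarrow> phi x i = x i"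
    "\<And>i. i < k \<Longrightarrow> phi x i = min_path_to k (s (Suc k) (succ (Suc k) (x k))) i"
    "\<And>i. i < k \<Longrightarrow> ismin (Suc i) (phi x i)" "\<not> ismin (Suc k) (phi x k)"
proof -
  have P: "phi x = (\<lambda>i. if k < i then x i else if i = k then succ (Suc k) (x k)
         else min_path_to k (s (Suc k) (succ (Suc k) (x k))) i)"
    unfolding phi_def k_def by (rule if_not_P[OF nm])
  show pk: "phi x k = succ (Suc k) (x k)" using P by simp
  show "\<And>i. k < i \<Longrightarrow> phi x i = x i" using P by simp
  show pl: "\<And>i. i < k \<Longrightarrow> phi x i = min_path_to k (s (Suc k) (succ (Suc k) (x k))) i" using P by simp
  have xk: "x k \<in> E (Suc k)" "\<not> ismax (Suc k) (x k)"
    using path_space_edge[OF x] first_nonmax_props[OF nm] k_def by auto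
  note S = succ_props[of "Suc k", OF _ xk]
  have "k \<ge> 1 \<Longrightarrow> s (Suc k) (succ (Suc k) (x k)) \<in> V" using S(2) source_V[of "Suc k"] by simp
  then show "\<And>i. i < k \<Longrightarrow> ismin (Suc i) (phi x i)" using pl min_path_to_props by simp
  show "\<not> ismin (Suc k) (phi x k)" using pk S(4) by simp
qed

lemma phi_nonmax_path:
  assumes x: "x \<in> path_space E s r" and nm: "\<not> (\<forall>i. ismax (Suc i) (x i))"
  shows "phi x \<in> path_space E s r"
proof -
  define k where "k = first_nonmax x"
  note P = phi_nonmax[OF x nm, folded k_def]
  have xk: "x k \<in> E (Suc k)" "\<not> ismax (Suc k) (x k)"
    using path_space_edge[OF x] first_nonmax_props[OF nm] k_def by auto
  note S = succ_props[of "Suc k", OF _ xk]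
  define w' where "w' = s (Suc k) (succ (Suc k) (x k))"
  have w'V: "k \<ge> 1 \<Longrightarrow> w' \<in> V" unfolding w'_def using S(2) source_V[of "Suc k"] by simp
  note mp = min_path_to_props[OF w'V]
  show ?thesis unfolding path_space_def
  proof (intro CollectI allI conjI)
    fix i
    consider "k < i" | "i = k" | "i < k" by linarith
    then show "phi x i \<in> E (Suc i)"
      by cases (use P(1-3) S(2) path_space_edge[OF x] mp in \<open>auto simp: w'_def\<close>)
    consider "k < i" | "i = k" | "Suc i = k" | "Suc i < k" by linarith
    then show "r (Suc i) (phi x i) = s (Suc (Suc i)) (phi x (Suc i))"
    proof cases
      case 3
      have "r k (min_path_to k w' i) = w'" using mp[of i k] 3 by simp
      then show ?thesis using 3 P(1,3) by (simp add: w'_def)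
    qed (use P(1-3) S(3) path_space_edge[OF x, of k] path_space_edge[OF x, of i] mp in
        \<open>auto simp: w'_def\<close>)
  qed
qed

lemma phi_M: "t \<in> Vt \<Longrightarrow> phi (M t) = m (\<sigma> t)"
  using M_ismax M_range[of t 0] unfolding phi_def by simp

lemma sigma_in: "t \<in> Vt \<Longrightarrow> \<sigma> t \<in> Vb"
  using sigma by (auto simp: bij_betw_def)

lemma phi_path: "x \<in> path_space E s r \<Longrightarrow> phi x \<in> path_space E s r"
proof (cases "\<forall>i. ismax (Suc i) (x i)")
  case True
  assume x: "x \<in> path_space E s r"
  then have "x \<in> M ` Vt" using max_prefix_paths True by blast
  then obtain t where t: "t \<in> Vt" "x = M t" by blast
  then show ?thesis using phi_M m_path sigma_in by simp
next
  case False
  assume x: "x \<in> path_space E s r"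
  then show ?thesis using phi_nonmax_path[OF x False] by simp
qed

text \<open>Continuity at a maximal path M t.  A nearby path y with first non-maximal edge at a deep
  level k >= K starts like M t, so the edge succeeding y k has source labelled sigma t by the
  linking property of the lists; hence phi y begins with the minimal path m (sigma t).  This is the
  only place where the linking (balance) condition on the lists is needed.\<close>
lemma phi_near_max:
  assumes y: "y \<in> path_space E s r" and nm: "\<not> (\<forall>i. ismax (Suc i) (y i))"
    and t: "t \<in> Vt" and y0: "y 0 = M t 0"
    and deep: "K \<le> first_nonmax y" and i: "Suc i < first_nonmax y"
  shows "phi y i = m (\<sigma> t) i"
proof -
  define k where "k = first_nonmax y"
  have yk: "y k \<in> E (Suc k)" "\<not> ismax (Suc k) (y k)" and below: "\<forall>j<k. ismax (Suc j) (y j)"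
    using path_space_edge[OF y] first_nonmax_props[OF nm] k_def by auto
  define e' where "e' = succ (Suc k) (y k)"
  define w' where "w' = s (Suc k) e'"
  note S = succ_props[of "Suc k", OF _ yk]
  have w'V: "w' \<in> V" unfolding w'_def e'_def using S(2) source_V[of "Suc k"] deep K2 k_def by simp
  have "phi y i = min_path_to k w' i" using phi_nonmax(3)[OF y nm] i by (simp add: k_def w'_def e'_def)
  also have "\<dots> = m (vb w') i" using min_path_to_eq_m[OF w'V] i k_def by simp
  finally have phi_y: "phi y i = m (vb w') i" .
  have ik: "Suc i < k" using i k_def by simp
  then obtain k' where k': "k = Suc k'" by (cases k) auto
  have "Suc 0 < k" using ik by simp
  then have "r (Suc 0) (y 0) = vt (r k (y (k - 1)))" using max_prefix_is_M[OF y below] by blast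
  moreover have "r (Suc 0) (y 0) = t" using y0 M_range[OF t] by simp
  moreover have "r k (y (k - 1)) = s (Suc k) (y k)" using path_space_edge[OF y, of k'] k' by simp
  ultimately have "vt (s (Suc k) (y k)) = t" by simp
  moreover have "\<sigma> (vt (s (Suc k) (y k))) = vb w'"
    using consec_successively[OF L_linked S(1)] range_V[of "Suc k"] yk(1) deep k_def
    by (simp add: e'_def w'_def)
  ultimately show ?thesis using phi_y by simp
qed

lemma phi_cont_at_max:
  assumes x: "x \<in> path_space E s r" and mx: "\<forall>i. ismax (Suc i) (x i)"
  shows "\<exists>n. \<forall>y\<in>path_space E s r. (\<forall>j<n. y j = x j) \<longrightarrow> phi y i = phi x i"
proof -
  obtain t where t: "t \<in> Vt" "x = M t" using max_prefix_paths x mx by blast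
  have "phi y i = phi x i" if y: "y \<in> path_space E s r" and agree: "\<forall>j<i + 2 + K. y j = x j" for y
  proof (cases "\<forall>i. ismax (Suc i) (y i)")
    case True
    then show ?thesis using agree mx unfolding phi_def by simp
  next
    case False
    have "\<not> first_nonmax y < i + 2 + K"
      using first_nonmax_props[OF False] agree mx by auto
    then show ?thesis using phi_near_max[OF y False t(1)] agree phi_M[OF t(1)] t(2) by simp
  qed
  then show ?thesis by blast
qed

text \<open>Continuity at non-maximal paths: phi only changes coordinates up to the first
  non-maximal edge.\<close>
lemma phi_cont_at_nonmax:
  assumes nm: "\<not> (\<forall>i. ismax (Suc i) (x i))"
  shows "\<exists>n. \<forall>y\<in>path_space E s r. (\<forall>j<n. y j = x j) \<longrightarrow> phi y i = phi x i"
proof -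
  define k where "k = first_nonmax x"
  have "phi y i = phi x i" if agree: "\<forall>j<Suc (max k i). y j = x j" for y
  proof -
    have xk: "\<not> ismax (Suc k) (x k)" "\<forall>j<k. ismax (Suc j) (x j)"
      using first_nonmax_props[OF nm] k_def by auto
    then have yk: "\<not> ismax (Suc k) (y k)" "\<forall>j<k. ismax (Suc j) (y j)" using agree by auto
    then have nmy: "\<not> (\<forall>i. ismax (Suc i) (y i))" by blast
    have "first_nonmax y = k" using first_nonmax_eq[OF yk] .
    then show ?thesis using agree nm nmy unfolding phi_def k_def by auto
  qed
  then show ?thesis by blast
qed

lemma phi_cont:
  "x \<in> path_space E s r \<Longrightarrow> \<exists>n. \<forall>y\<in>path_space E s r. (\<forall>j<n. y j = x j) \<longrightarrow> phi y i = phi x i"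
  using phi_cont_at_max phi_cont_at_nonmax by blast

lemma linked_dual: "K \<le> n \<Longrightarrow> u \<in> V \<Longrightarrow>
   successively (\<lambda>e e'. inv_into Vt \<sigma> (vb (s n e)) = vt (s n e')) (rev (L n u))"
proof -
  assume n: "K \<le> n" and u: "u \<in> V"
  have n1: "1 \<le> n" "2 \<le> n" using n K2 by auto
  have g: "successively (\<lambda>e e'. \<sigma> (vt (s n e)) = vb (s n e')) (L n u)" using L_linked[OF n u] .
  have inj: "inj_on \<sigma> Vt" using sigma by (simp add: bij_betw_def)
  have "successively (\<lambda>x y. inv_into Vt \<sigma> (vb (s n y)) = vt (s n x)) (L n u)"
  proof (rule successively_mono[OF g])
    fix x y assume xm: "x \<in> set (L n u)" and "y \<in> set (L n u)" and eq: "\<sigma> (vt (s n x)) = vb (s n y)"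
    have "x \<in> E n" using L_mem[OF n1(1) u] xm by blast
    hence "vt (s n x) \<in> Vt" using vt_in source_V[OF n1(2)] by blast
    thus "inv_into Vt \<sigma> (vb (s n y)) = vt (s n x)" using eq[symmetric] inv_into_f_f[OF inj] by simp
  qed
  thus ?thesis by simp
qed

lemma skeleton_dual: "skeleton V E s r Vb Vt m M vb vt eb et"
  using skel unfolding skeleton_def by (simp add: Int_commute) (metis)

lemma dual: "edge_lists V E s r Vb Vt m M vb vt eb et (inv_into Vt \<sigma>) (\<lambda>n u. rev (L n u)) K"
proof (unfold_locales)
  show "skeleton V E s r Vb Vt m M vb vt eb et" by (rule skeleton_dual)
  show "bij_betw (inv_into Vt \<sigma>) Vb Vt" using sigma by (rule bij_betw_inv_into)
qed (use range_V source_V L_distinct L_set L_nonempty L1_last L1_hd L_last L_hd linked_dual K2 in \<open>simp_all add: last_rev hd_rev\<close>)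

abbreviation "L_rev \<equiv> (\<lambda>n u. rev (L n u))"
abbreviation "psi \<equiv> edge_lists.phi E s r M (inv_into Vt \<sigma>) L_rev"

lemma dual_ismax: "edge_lists.ismax E r L_rev n e = ismin n e"
  by (simp add: edge_lists.ismax_def[OF dual] ismin_def last_rev)
lemma dual_ismin: "edge_lists.ismin E r L_rev n e = ismax n e"
  by (simp add: edge_lists.ismin_def[OF dual] ismax_def hd_rev)
lemma dual_succ: "edge_lists.succ r L_rev n e = pred n e"
  by (simp add: edge_lists.succ_def[OF dual] pred_def consec_rev)
lemma dual_min_path_to: "edge_lists.min_path_to s L_rev k w i = max_path_to k w i"
  by (induction k arbitrary: w) (simp_all add: edge_lists.min_path_to.simps[OF dual] hd_rev)

lemma min_prefix_paths: "{x \<in> path_space E s r. \<forall>i. ismin (Suc i) (x i)} = m ` Vb"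
  using edge_lists.max_prefix_paths[OF dual] by (simp add: dual_ismax)

lemma psi_m: "b \<in> Vb \<Longrightarrow> psi (m b) = M (inv_into Vt \<sigma> b)"
  by (rule edge_lists.phi_M[OF dual])

lemma psi_path: "x \<in> path_space E s r \<Longrightarrow> psi x \<in> path_space E s r"
  by (rule edge_lists.phi_path[OF dual])

lemma psi_cont: "x \<in> path_space E s r \<Longrightarrow> \<exists>n. \<forall>y\<in>path_space E s r. (\<forall>j<n. y j = x j) \<longrightarrow> psi y i = psi x i"
  by (rule edge_lists.phi_cont[OF dual])

lemma dual_first_nonmax_eq: "\<not> ismin (Suc k) (x k) \<Longrightarrow> \<forall>i<k. ismin (Suc i) (x i) \<Longrightarrow> edge_lists.first_nonmax E r L_rev x = k"
  using edge_lists.first_nonmax_eq[OF dual, of k x] by (simp add: dual_ismax)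

lemma dual_first_nonmax_props: "\<not> (\<forall>i. ismin (Suc i) (x i)) \<Longrightarrow>
   \<not> ismin (Suc (edge_lists.first_nonmax E r L_rev x)) (x (edge_lists.first_nonmax E r L_rev x)) \<and> (\<forall>i<edge_lists.first_nonmax E r L_rev x. ismin (Suc i) (x i))"
  using edge_lists.first_nonmax_props[OF dual, of x] by (simp add: dual_ismax)

lemma psi_nonmin:
  assumes x: "x \<in> path_space E s r" and nm: "\<not> (\<forall>i. ismin (Suc i) (x i))"
  defines "k \<equiv> edge_lists.first_nonmax E r L_rev x"
  shows "psi x k = pred (Suc k) (x k)" "\<And>i. k < i \<Longrightarrow> psi x i = x i"
    "\<And>i. i < k \<Longrightarrow> psi x i = max_path_to k (s (Suc k) (pred (Suc k) (x k))) i"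
    "\<And>i. i < k \<Longrightarrow> ismax (Suc i) (psi x i)" "\<not> ismax (Suc k) (psi x k)"
proof -
  have nm': "\<not> (\<forall>i. edge_lists.ismax E r L_rev (Suc i) (x i))" using nm by (simp add: dual_ismax)
  note P = edge_lists.phi_nonmax[OF dual x nm']
  show "psi x k = pred (Suc k) (x k)" using P(1) by (simp add: k_def dual_succ)
  show "\<And>i. k < i \<Longrightarrow> psi x i = x i" using P(2) by (simp add: k_def)
  show "\<And>i. i < k \<Longrightarrow> psi x i = max_path_to k (s (Suc k) (pred (Suc k) (x k))) i"
    using P(3) by (simp add: k_def dual_succ dual_min_path_to)
  show "\<And>i. i < k \<Longrightarrow> ismax (Suc i) (psi x i)" using P(4) by (simp add: k_def dual_ismin)
  show "\<not> ismax (Suc k) (psi x k)" using P(5) by (simp add: k_def dual_ismin)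
qed

lemma inv_sigma: "t \<in> Vt \<Longrightarrow> inv_into Vt \<sigma> (\<sigma> t) = t"
  using sigma by (simp add: bij_betw_def inv_into_f_f)
lemma sigma_inv: "b \<in> Vb \<Longrightarrow> \<sigma> (inv_into Vt \<sigma> b) = b"
  using sigma by (simp add: bij_betw_def f_inv_into_f)
lemma inv_sigma_in: "b \<in> Vb \<Longrightarrow> inv_into Vt \<sigma> b \<in> Vt"
  using sigma by (metis bij_betw_def inv_into_into)

lemma max_prefix_eq_max_path_to:
  "x \<in> path_space E s r \<Longrightarrow> \<forall>i<k. ismax (Suc i) (x i) \<Longrightarrow> i < k
     \<Longrightarrow> x i = max_path_to k (s (Suc k) (x k)) i"
  using edge_lists.min_prefix_eq_min_path_to[OF dual] by (simp add: dual_ismin dual_min_path_to)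

text \<open>phi and psi are mutually inverse: psi undoes the successor step of phi by the predecessor
  step, and restores the maximal edges below it.\<close>
lemma psi_phi: "x \<in> path_space E s r \<Longrightarrow> psi (phi x) = x"
proof (cases "\<forall>i. ismax (Suc i) (x i)")
  case True
  assume x: "x \<in> path_space E s r"
  then have "x \<in> M ` Vt" using max_prefix_paths True by blast
  then obtain t where t: "t \<in> Vt" "x = M t" by blast
  then show ?thesis using phi_M psi_m sigma_in inv_sigma by simp
next
  case False
  assume x: "x \<in> path_space E s r"
  define k where "k = first_nonmax x"
  define y where "y = phi x"
  note P = phi_nonmax[OF x False]
  have y: "y \<in> path_space E s r" using phi_nonmax_path[OF x False] y_def by simp
  have ymin: "\<forall>i<k. ismin (Suc i) (y i)" "\<not> ismin (Suc k) (y k)" using P(4,5) by (auto simp: y_def k_def)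
  have nmy: "\<not> (\<forall>i. ismin (Suc i) (y i))" using ymin by blast
  have fy: "edge_lists.first_nonmax E r L_rev y = k" using dual_first_nonmax_eq[OF ymin(2,1)] .
  note Q = psi_nonmin[OF y nmy]
  have xk: "x k \<in> E (Suc k)" "\<not> ismax (Suc k) (x k)" using path_space_edge[OF x] first_nonmax_props[OF False] k_def by auto
  have yk: "y k = succ (Suc k) (x k)" using P(1) by (simp add: y_def k_def)
  have pk: "pred (Suc k) (y k) = x k" using succ_props(5)[of "Suc k", OF _ xk] yk by simp
  have below: "\<forall>i<k. ismax (Suc i) (x i)" using first_nonmax_props[OF False] k_def by simp
  show "psi (phi x) = x"
  proof
    fix i
    consider "k < i" | "i = k" | "i < k" by linarith
    then show "psi (phi x) i = x i"
    proof cases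
      case 1 then show ?thesis using Q(2) P(2) fy by (simp add: y_def k_def)
    next
      case 2 then show ?thesis using Q(1) fy pk by (simp add: y_def)
    next
      case 3
      have "psi y i = max_path_to k (s (Suc k) (x k)) i" using Q(3)[of i] fy pk 3 by simp
      also have "\<dots> = x i" using max_prefix_eq_max_path_to[OF x below 3] by simp
      finally show ?thesis by (simp add: y_def)
    qed
  qed
qed

lemma phi_psi: "y \<in> path_space E s r \<Longrightarrow> phi (psi y) = y"
proof (cases "\<forall>i. ismin (Suc i) (y i)")
  case True
  assume y: "y \<in> path_space E s r"
  then have "y \<in> m ` Vb" using min_prefix_paths True by blast
  then obtain b where b: "b \<in> Vb" "y = m b" by blast
  then show ?thesis using phi_M psi_m inv_sigma_in sigma_inv by simp
next
  case False
  assume y: "y \<in> path_space E s r"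
  define k where "k = edge_lists.first_nonmax E r L_rev y"
  define x where "x = psi y"
  note Q = psi_nonmin[OF y False]
  have x: "x \<in> path_space E s r" using psi_path[OF y] x_def by simp
  have xmax: "\<forall>i<k. ismax (Suc i) (x i)" "\<not> ismax (Suc k) (x k)" using Q(4,5) by (auto simp: x_def k_def)
  have nmx: "\<not> (\<forall>i. ismax (Suc i) (x i))" using xmax by blast
  have fx: "first_nonmax x = k" using first_nonmax_eq[OF xmax(2,1)] .
  note P = phi_nonmax[OF x nmx]
  have yk: "y k \<in> E (Suc k)" "\<not> ismin (Suc k) (y k)" using path_space_edge[OF y] dual_first_nonmax_props[OF False] k_def by auto
  have xk: "x k = pred (Suc k) (y k)" using Q(1) by (simp add: x_def k_def)
  have sk: "succ (Suc k) (x k) = y k" using pred_props(5)[of "Suc k", OF _ yk] xk by simp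
  have below: "\<forall>i<k. ismin (Suc i) (y i)" using dual_first_nonmax_props[OF False] k_def by simp
  show "phi (psi y) = y"
  proof
    fix i
    consider "k < i" | "i = k" | "i < k" by linarith
    then show "phi (psi y) i = y i"
    proof cases
      case 1 then show ?thesis using Q(2) P(2) fx by (simp add: x_def k_def)
    next
      case 2 then show ?thesis using P(1) fx sk by (simp add: x_def)
    next
      case 3
      have "phi x i = min_path_to k (s (Suc k) (y k)) i" using P(3)[of i] fx sk 3 by simp
      also have "\<dots> = y i" using min_prefix_eq_min_path_to[OF y below 3] by simp
      finally show ?thesis by (simp add: x_def)
    qed
  qed
qed

definition order_rel :: "nat \<Rightarrow> 'e rel" where
  "order_rel n = (\<Union>u\<in>V. list_order (L n u))"

lemma order_rel_iff: "1 \<le> n \<Longrightarrow> (a, b) \<in> order_rel n \<longleftrightarrow>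
   a \<in> E n \<and> b \<in> E n \<and> r n a = r n b \<and> (a, b) \<in> list_order (L n (r n a))"
  using L_mem range_V by (auto simp: order_rel_def list_order_def)

lemma order_rel_is_ordering: "is_ordering V E r order_rel"
  unfolding is_ordering_def
proof (intro allI impI conjI ballI)
  fix n :: nat assume n: "1 \<le> n"
  show "order_rel n \<subseteq> {(e, e'). e \<in> E n \<and> e' \<in> E n \<and> r n e = r n e'}"
    using order_rel_iff[OF n] by auto
  fix v assume v: "v \<in> V"
  have "order_rel n \<inter> rinv E r n v \<times> rinv E r n v = list_order (L n v)"
    using L_set[OF n v] order_rel_iff[OF n] L_mem[OF n v] by (auto simp: rinv_def list_order_def)
  then show "linear_order_on (rinv E r n v) (order_rel n \<inter> rinv E r n v \<times> rinv E r n v)"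
    using linear_list_order[of "L n v"] L_set[OF n v] by simp
qed

lemma max_edge_iff:
  assumes n: "1 \<le> n" shows "max_edge E r order_rel n e \<longleftrightarrow> ismax n e"
proof (cases "e \<in> E n")
  case True
  define u where "u = r n e"
  have u: "u \<in> V" using range_V n True by (simp add: u_def)
  have e: "e \<in> set (L n u)" using L_mem[OF n u] True u_def by simp
  have "max_edge E r order_rel n e \<longleftrightarrow> (\<forall>b\<in>set (L n u). (b, e) \<in> list_order (L n u))"
    using L_mem[OF n u] True by (auto simp: max_edge_def order_rel_iff[OF n] u_def)
  also have "\<dots> \<longleftrightarrow> e = last (L n u)" by (rule list_order_greatest[OF L_distinct[OF n u] e])
  finally show ?thesis using True by (simp add: ismax_def u_def)
qed (simp add: max_edge_def ismax_def)

lemma min_edge_iff: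
  assumes n: "1 \<le> n" shows "min_edge E r order_rel n e \<longleftrightarrow> ismin n e"
proof (cases "e \<in> E n")
  case True
  define u where "u = r n e"
  have u: "u \<in> V" using range_V n True by (simp add: u_def)
  have e: "e \<in> set (L n u)" using L_mem[OF n u] True u_def by simp
  have "min_edge E r order_rel n e \<longleftrightarrow> (\<forall>b\<in>set (L n u). (e, b) \<in> list_order (L n u))"
    using L_mem[OF n u] True by (auto simp: min_edge_def order_rel_iff[OF n] u_def)
  also have "\<dots> \<longleftrightarrow> e = hd (L n u)" by (rule list_order_least[OF L_distinct[OF n u] e])
  finally show ?thesis using True by (simp add: ismin_def u_def)
qed (simp add: min_edge_def ismin_def)

lemma consec_is_succ:
  assumes n: "1 \<le> n" and e: "e \<in> E n" and c: "consec (L n (r n e)) e e'"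
  shows "is_succ order_rel n e e'"
proof -
  define u where "u = r n e"
  have u: "u \<in> V" using range_V n e by (simp add: u_def)
  note cover = consec_list_order_cover[OF L_distinct[OF n u] c[folded u_def]]
  have e': "e' \<in> E n" "r n e' = u" using consec_mem[OF c] L_mem[OF n u] by (auto simp: u_def)
  show ?thesis unfolding is_succ_def
  proof (intro conjI allI impI)
    show "(e, e') \<in> order_rel n" using order_rel_iff[OF n] e e' cover(1) by (simp add: u_def)
    show "e \<noteq> e'" by (rule cover(2))
    fix c assume "(e, c) \<in> order_rel n \<and> (c, e') \<in> order_rel n"
    then have "(e, c) \<in> list_order (L n u)" "(c, e') \<in> list_order (L n u)"
      using order_rel_iff[OF n] by (auto simp: u_def)
    then show "c = e \<or> c = e'" by (rule cover(3))
  qed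
qed

lemma max_paths_eq: "max_paths E s r order_rel = M ` Vt"
  unfolding max_paths_def using max_edge_iff max_prefix_paths by simp

lemma min_paths_eq: "min_paths E s r order_rel = m ` Vb"
  unfolding min_paths_def using min_edge_iff min_prefix_paths by simp

lemma skeleton_edges_extremal:
  assumes "2 \<le> n" "w \<in> V"
  shows "max_edge E r order_rel n (et n w)" "min_edge E r order_rel n (eb n w)"
  using max_edge_iff min_edge_iff et_in[OF assms] eb_in[OF assms] L_last[OF assms] L_hd[OF assms] assms(1)
  by (simp_all add: ismax_def ismin_def)

lemma phi_homeomorphic: "homeomorphic_map (path_top E s r) (path_top E s r) phi"
proof -
  have "homeomorphic_maps (path_top E s r) (path_top E s r) phi psi"
    unfolding homeomorphic_maps_def topspace_path_top
    using continuous_map_by_cylinders[of E s r phi, OF phi_path phi_cont]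
      continuous_map_by_cylinders[of E s r psi, OF psi_path psi_cont] psi_phi phi_psi by blast
  then show ?thesis using homeomorphic_map_maps by blast
qed

lemma phi_max_paths: "phi ` max_paths E s r order_rel = min_paths E s r order_rel"
proof -
  have "phi ` M ` Vt = m ` \<sigma> ` Vt" using phi_M by (simp add: image_image)
  also have "\<sigma> ` Vt = Vb" using sigma by (simp add: bij_betw_def)
  finally show ?thesis unfolding max_paths_eq min_paths_eq .
qed

lemma phi_vershik_step:
  assumes x: "x \<in> path_space E s r" and nx: "x \<notin> max_paths E s r order_rel"
  shows "let k = LEAST i. \<not> max_edge E r order_rel (Suc i) (x i)
          in phi x \<in> path_space E s r \<and> (\<forall>i>k. phi x i = x i) \<and>
             is_succ order_rel (Suc k) (x k) (phi x k) \<and> (\<forall>i<k. min_edge E r order_rel (Suc i) (phi x i))"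
proof -
  have nm: "\<not> (\<forall>i. ismax (Suc i) (x i))" using nx x max_edge_iff by (simp add: max_paths_def)
  have least: "(LEAST i. \<not> max_edge E r order_rel (Suc i) (x i)) = first_nonmax x"
    unfolding first_nonmax_def using max_edge_iff by simp
  define k where "k = first_nonmax x"
  note P = phi_nonmax[OF x nm]
  have xk: "x k \<in> E (Suc k)" "\<not> ismax (Suc k) (x k)"
    using path_space_edge[OF x] first_nonmax_props[OF nm] k_def by auto
  have "is_succ order_rel (Suc k) (x k) (phi x k)"
    using consec_is_succ[of "Suc k", OF _ xk(1) succ_props(1)[of "Suc k", OF _ xk]] P(1) k_def by simp
  then show ?thesis
    unfolding least Let_def k_def[symmetric] using phi_nonmax_path[OF x nm] P(2) P(4) min_edge_iff k_def by simp
qed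

theorem ordering_with_vershik_map:
  "\<exists>\<omega> \<phi>. is_ordering V E r \<omega> \<and> vershik_map E s r \<omega> \<phi> \<and>
           max_paths E s r \<omega> = M ` Vt \<and> min_paths E s r \<omega> = m ` Vb \<and>
           (\<forall>n\<ge>2. \<forall>w\<in>V. max_edge E r \<omega> n (et n w) \<and> min_edge E r \<omega> n (eb n w)) \<and>
           (\<forall>t\<in>Vt. \<phi> (M t) = m (\<sigma> t))"
proof (intro exI conjI)
  show "vershik_map E s r order_rel phi"
    unfolding vershik_map_def using phi_homeomorphic phi_max_paths phi_vershik_step by blast
qed (use order_rel_is_ordering max_paths_eq min_paths_eq skeleton_edges_extremal phi_M in auto)

end

section \<open>Existence of linked lists and the theorem\<close>

lemma strict_rank_BD_facts:
  assumes "strict_rank_BD d v0 V E s r"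
  shows "finite V" "\<And>n. 1 \<le> n \<Longrightarrow> finite (E n)" "\<And>n e. 1 \<le> n \<Longrightarrow> e \<in> E n \<Longrightarrow> r n e \<in> V"
    "\<And>n e. 2 \<le> n \<Longrightarrow> e \<in> E n \<Longrightarrow> s n e \<in> V"
    "\<And>n v. 1 \<le> n \<Longrightarrow> v \<in> V \<Longrightarrow> 2 \<le> card (rinv E r n v)"
proof -
  fix n e assume "2 \<le> n" "e \<in> E n"
  then have "s n e \<in> lvl v0 V (n - 1)" using assms by (simp add: strict_rank_BD_def)
  then show "s n e \<in> V" using \<open>2 \<le> n\<close> by (simp add: lvl_def)
qed (use assms in \<open>simp_all add: strict_rank_BD_def\<close>)

definition admissible_list ::
  "(nat \<Rightarrow> 'e set) \<Rightarrow> (nat \<Rightarrow> 'e \<Rightarrow> 'v) \<Rightarrow> (nat \<Rightarrow> 'e \<Rightarrow> 'v) \<Rightarrow> 'v set \<Rightarrow> 'v set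
    \<Rightarrow> ('v \<Rightarrow> nat \<Rightarrow> 'e) \<Rightarrow> ('v \<Rightarrow> nat \<Rightarrow> 'e) \<Rightarrow> ('v \<Rightarrow> 'v) \<Rightarrow> ('v \<Rightarrow> 'v)
    \<Rightarrow> (nat \<Rightarrow> 'v \<Rightarrow> 'e) \<Rightarrow> (nat \<Rightarrow> 'v \<Rightarrow> 'e) \<Rightarrow> ('v \<Rightarrow> 'v) \<Rightarrow> nat \<Rightarrow> nat \<Rightarrow> 'v \<Rightarrow> 'e list \<Rightarrow> bool"
where
  "admissible_list E s r Vt Vb M m vt vb et eb \<sigma> K n u xs \<longleftrightarrow>
     distinct xs \<and> set xs = rinv E r n u \<and>
     (n = 1 \<longrightarrow> (u \<in> Vt \<longrightarrow> last xs = M u 0) \<and> (u \<in> Vb \<longrightarrow> hd xs = m u 0)) \<and>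
     (2 \<le> n \<longrightarrow> hd xs = eb n u \<and> last xs = et n u) \<and>
     (K \<le> n \<longrightarrow> successively (\<lambda>e e'. \<sigma> (vt (s n e)) = vb (s n e')) xs)"

text \<open>Admissible lists exist at every level, provided the levels from K on are positively
  strongly connected and balanced (these are the levels n with incidence matrix F_{n-1}).\<close>
lemma admissible_list_exists:
  assumes BD: "strict_rank_BD d v0 V E s r"
    and skel: "skeleton V E s r Vt Vb M m vt vb et eb" and sigma: "bij_betw \<sigma> Vt Vb"
    and K: "2 \<le> K" and n: "1 \<le> n" and u: "u \<in> V"
    and deep: "K \<le> n \<Longrightarrow> pos_strongly_connected V E s r Vt Vb vt vb et \<sigma> (n - 1) \<and>
          (\<forall>u\<in>V. \<forall>t\<in>Vt. (\<Sum>w\<in>{w\<in>V. vt w = t}. incid_t E s r et (n - 1) u w)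
                        = (\<Sum>w\<in>{w\<in>V. vb w = \<sigma> t}. incid_t E s r eb (n - 1) u w))"
  shows "\<exists>xs. admissible_list E s r Vt Vb M m vt vb et eb \<sigma> K n u xs"
proof -
  note BD_facts = strict_rank_BD_facts[OF BD]
  have fin: "finite (rinv E r n u)" using BD_facts(2)[OF n] by (simp add: rinv_def)
  have ends: "et n u \<in> rinv E r n u" "eb n u \<in> rinv E r n u" "et n u \<noteq> eb n u" if "2 \<le> n"
    using skel that u unfolding skeleton_def by blast+
  consider "n = 1" | "2 \<le> n" "n < K" | "K \<le> n" using n by linarith
  then show ?thesis
  proof cases
    case 1
    have "u \<in> Vb \<Longrightarrow> m u 0 \<in> rinv E r n u" "u \<in> Vt \<Longrightarrow> M u 0 \<in> rinv E r n u"
      using skel 1 by (auto simp: skeleton_def rinv_def path_space_def)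
    moreover have "u \<in> Vb \<Longrightarrow> u \<in> Vt \<Longrightarrow> m u 0 \<noteq> M u 0"
      using skel unfolding skeleton_def by (metis IntI)
    ultimately obtain xs where "distinct xs" "set xs = rinv E r n u"
      "u \<in> Vb \<longrightarrow> hd xs = m u 0" "u \<in> Vt \<longrightarrow> last xs = M u 0"
      using list_with_optional_ends[OF fin BD_facts(5)[OF n u]] by metis
    then show ?thesis using 1 K by (auto simp: admissible_list_def)
  next
    case 2
    then obtain xs where "distinct xs" "set xs = rinv E r n u" "hd xs = eb n u" "last xs = et n u"
      using list_with_ends[OF fin] ends by metis
    then show ?thesis using 2 by (auto simp: admissible_list_def)
  next
    case 3
    then obtain n' where n': "n = Suc n'" using K by (cases n) auto
    interpret level: level_at_vertex V E s r Vt Vb vt vb et eb \<sigma> n' u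
      using BD_facts skel sigma u ends K 3 unfolding n'
      by unfold_locales (auto simp: skeleton_def)
    obtain xs where "distinct xs" "set xs = rinv E r n u" "hd xs = eb n u" "last xs = et n u"
        "successively (\<lambda>e e'. \<sigma> (vt (s n e)) = vb (s n e')) xs"
      using level.euler_ordering deep[OF 3] u unfolding n' by auto
    then show ?thesis using 3 K by (auto simp: admissible_list_def)
  qed
qed

lemma edge_lists_exist:
  assumes BD: "strict_rank_BD d v0 V E s r"
    and skel: "skeleton V E s r Vt Vb M m vt vb et eb" and sigma: "bij_betw \<sigma> Vt Vb"
    and deep: "\<forall>n\<ge>N. pos_strongly_connected V E s r Vt Vb vt vb et \<sigma> n \<and>
          (\<forall>u\<in>V. \<forall>t\<in>Vt. (\<Sum>w\<in>{w\<in>V. vt w = t}. incid_t E s r et n u w)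
                        = (\<Sum>w\<in>{w\<in>V. vb w = \<sigma> t}. incid_t E s r eb n u w))"
  shows "\<exists>L K. edge_lists V E s r Vt Vb M m vt vb et eb \<sigma> L K"
proof -
  define K where "K = Suc (max N 1)"
  have K: "2 \<le> K" by (simp add: K_def)
  have "\<forall>n u. \<exists>xs. 1 \<le> n \<and> u \<in> V \<longrightarrow> admissible_list E s r Vt Vb M m vt vb et eb \<sigma> K n u xs"
    using admissible_list_exists[OF BD skel sigma K] deep by (simp add: K_def)
  then obtain L where L: "\<And>n u. 1 \<le> n \<Longrightarrow> u \<in> V \<Longrightarrow> admissible_list E s r Vt Vb M m vt vb et eb \<sigma> K n u (L n u)"
    by metis
  note BD_facts = strict_rank_BD_facts[OF BD]
  have "edge_lists V E s r Vt Vb M m vt vb et eb \<sigma> L K"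
  proof (unfold_locales)
    show "L n u \<noteq> []" if "1 \<le> n" "u \<in> V" for n u
      using L[OF that] BD_facts(5)[OF that] by (auto simp: admissible_list_def)
    show "last (L 1 u) = M u 0" if "u \<in> Vt" for u
      using L[of 1 u] that skel by (auto simp: admissible_list_def skeleton_def)
    show "hd (L 1 u) = m u 0" if "u \<in> Vb" for u
      using L[of 1 u] that skel by (auto simp: admissible_list_def skeleton_def)
  qed (use BD_facts skel sigma K L in \<open>auto simp: admissible_list_def\<close>)
  then show ?thesis by blast
qed

theorem mainTheorem15:
  fixes d :: nat and v0 :: 'v and V :: "'v set" and E :: "nat \<Rightarrow> 'e set"
    and s r :: "nat \<Rightarrow> 'e \<Rightarrow> 'v"
    and Vt Vb :: "'v set" and M m :: "'v \<Rightarrow> nat \<Rightarrow> 'e" and vt vb :: "'v \<Rightarrow> 'v"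
    and et eb :: "nat \<Rightarrow> 'v \<Rightarrow> 'e" and \<sigma> :: "'v \<Rightarrow> 'v"
  assumes BD: "strict_rank_BD d v0 V E s r"
    and simple: "simple_BD v0 V E s r"
    and skel: "skeleton V E s r Vt Vb M m vt vb et eb"
    and sigma: "bij_betw \<sigma> Vt Vb"
    and eventually: "\<exists>N. \<forall>n\<ge>N.
          pos_strongly_connected V E s r Vt Vb vt vb et \<sigma> n \<and>
          (\<forall>u\<in>V. \<forall>t\<in>Vt. (\<Sum>w\<in>{w\<in>V. vt w = t}. incid_t E s r et n u w)
                        = (\<Sum>w\<in>{w\<in>V. vb w = \<sigma> t}. incid_t E s r eb n u w))"
  shows "\<exists>\<omega> \<phi>. is_ordering V E r \<omega> \<and> vershik_map E s r \<omega> \<phi> \<and>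
           max_paths E s r \<omega> = M ` Vt \<and> min_paths E s r \<omega> = m ` Vb \<and>
           (\<forall>n\<ge>2. \<forall>w\<in>V. max_edge E r \<omega> n (et n w) \<and> min_edge E r \<omega> n (eb n w)) \<and>
           (\<forall>t\<in>Vt. \<phi> (M t) = m (\<sigma> t))"
proof -
  obtain N where "\<forall>n\<ge>N. pos_strongly_connected V E s r Vt Vb vt vb et \<sigma> n \<and>
          (\<forall>u\<in>V. \<forall>t\<in>Vt. (\<Sum>w\<in>{w\<in>V. vt w = t}. incid_t E s r et n u w)
                        = (\<Sum>w\<in>{w\<in>V. vb w = \<sigma> t}. incid_t E s r eb n u w))"
    using eventually by blast
  then obtain L K where "edge_lists V E s r Vt Vb M m vt vb et eb \<sigma> L K"
    using edge_lists_exist[OF BD skel sigma] by blast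
  then show ?thesis by (rule edge_lists.ordering_with_vershik_map)
qed

end
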